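(* (i) For any $\beta\in N$, $\mathbb C[K^\circ,\Sigma]\subset M(\beta)\subset\mathbb C[K,\Sigma]$. (ii) If $\beta\in-K^\circ$, then $M(\beta)=\mathbb C[K^\circ,\Sigma]$.
   Context: $N\cong\mathbb Z^d$ lattice, $\mathcal A=\{v_1,\dots,v_n\}\subset N$ generating $N$ with a homomorphism $\mathrm h:N\to\mathbb Z$, $\mathrm h(v_j)=1$; $K=\mathbb R_{\ge0}\mathrm{Conv}(\mathcal A)$, $K^\circ$ its interior; $\Sigma$ the simplicial fan supported on $K$ from a regular triangulation with vertices in $\mathcal A$. $\mathbb C[K,\Sigma]$: basis $x^w$ ($w\in K\cap N$), $x^{w_1}x^{w_2}=x^{w_1+w_2}$ if some cone of $\Sigma$ contains both, else $0$; $\mathbb C[K^\circ,\Sigma]$ the ideal spanned by $x^w$, $w\in K^\circ\cap N$. $\mathrm{Box}(\Sigma)$: $v=\sum q_jv_j\in N$, $0\le q_j<1$, $q_j=0$ unless $v_j$ spans a ray of a fixed maximal cone; $\sigma(v)$ smallest cone containing $v$. $R$: subring generated by $x^{v_j}$, $\mathbb R_{\ge0}v_j\in\Sigma$. $M(\beta)$: the $R$-submodule generated by $x^v\prod_{j:r_j<0,\ \mathbb R_{\ge0}v_j\in\Sigma,\ \mathbb R_{\ge0}v_j\not\prec\sigma(v)}x^{v_j}$ for all $v\in\mathrm{Box}(\Sigma)$, $r\in\mathbb Z^n$ with $v+\sum r_jv_j=\beta$ and $r_j\ge0$ whenever $\mathbb R_{\ge0}v_j\notin\Sigma$. *)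

theory Defs
  imports "HOL-Analysis.Analysis"
begin

text \<open>The lattice N is realised as the integer points of real^'d (so N = Z^d
  inside N_R = R^d). The set A = {v_0,...,v_(n-1)} is given by an injective family
  vs :: nat => real^'d on {..<n}. Elements of C[K,Sigma] are finitely supported
  functions from lattice points to complex numbers (coefficient of x^w).\<close>

definition lattice :: "(real^'d) set" where
  "lattice = {x. \<forall>i. x $ i \<in> \<int>}"

definition Kcone :: "(nat \<Rightarrow> real^'d) \<Rightarrow> nat \<Rightarrow> (real^'d) set" where
  "Kcone vs n = {t *\<^sub>R x | t x. t \<ge> 0 \<and> x \<in> convex hull (vs ` {..<n})}"

text \<open>Cells of the regular subdivision induced by heights om: the label sets of the
  lower faces of the lifted point configuration (linear functionals suffice since all
  v_j lie on the hyperplane h = 1).\<close>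
definition cells :: "(nat \<Rightarrow> real^'d) \<Rightarrow> nat \<Rightarrow> (nat \<Rightarrow> real) \<Rightarrow> nat set set" where
  "cells vs n om =
     {{j \<in> {..<n}. a \<bullet> vs j = om j} | a. \<forall>j<n. a \<bullet> vs j \<le> om j}"

definition regular_triangulation :: "(nat \<Rightarrow> real^'d) \<Rightarrow> nat \<Rightarrow> (nat \<Rightarrow> real) \<Rightarrow> bool" where
  "regular_triangulation vs n om \<longleftrightarrow>
     (\<forall>S \<in> cells vs n om. independent (vs ` S) \<and> inj_on vs S)"

definition cone_of :: "(nat \<Rightarrow> real^'d) \<Rightarrow> nat set \<Rightarrow> (real^'d) set" where
  "cone_of vs S = {\<Sum>j\<in>S. c j *\<^sub>R vs j | c. \<forall>j\<in>S. c j \<ge> 0}"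

definition fan :: "(nat \<Rightarrow> real^'d) \<Rightarrow> nat \<Rightarrow> (nat \<Rightarrow> real) \<Rightarrow> (real^'d) set set" where
  "fan vs n om = cone_of vs ` cells vs n om"

definition ray :: "(nat \<Rightarrow> real^'d) \<Rightarrow> nat \<Rightarrow> (real^'d) set" where
  "ray vs j = {c *\<^sub>R vs j | c. c \<ge> 0}"

definition compat :: "(nat \<Rightarrow> real^'d) \<Rightarrow> nat \<Rightarrow> (nat \<Rightarrow> real) \<Rightarrow> real^'d \<Rightarrow> real^'d \<Rightarrow> bool" where
  "compat vs n om w1 w2 \<longleftrightarrow> (\<exists>\<sigma> \<in> fan vs n om. w1 \<in> \<sigma> \<and> w2 \<in> \<sigma>)"

definition mono :: "real^'d \<Rightarrow> (real^'d \<Rightarrow> complex)" where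
  "mono w = (\<lambda>u. if u = w then 1 else 0)"

text \<open>Multiplication of C[K,Sigma], the bilinear extension of
  x^w1 x^w2 = x^(w1+w2) if some cone contains w1, w2 and 0 otherwise.\<close>
definition kmult :: "(nat \<Rightarrow> real^'d) \<Rightarrow> nat \<Rightarrow> (nat \<Rightarrow> real)
     \<Rightarrow> (real^'d \<Rightarrow> complex) \<Rightarrow> (real^'d \<Rightarrow> complex) \<Rightarrow> (real^'d \<Rightarrow> complex)" where
  "kmult vs n om f g = (\<lambda>w. \<Sum>(a, b) \<in> {(a, b). f a \<noteq> 0 \<and> g b \<noteq> 0 \<and> a + b = w
        \<and> compat vs n om a b}. f a * g b)"

definition kprod_list :: "(nat \<Rightarrow> real^'d) \<Rightarrow> nat \<Rightarrow> (nat \<Rightarrow> real)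
     \<Rightarrow> (real^'d \<Rightarrow> complex) list \<Rightarrow> (real^'d \<Rightarrow> complex)" where
  "kprod_list vs n om fs = foldr (kmult vs n om) fs (mono 0)"

definition CK :: "(nat \<Rightarrow> real^'d) \<Rightarrow> nat \<Rightarrow> (real^'d \<Rightarrow> complex) set" where
  "CK vs n = {f. finite {w. f w \<noteq> 0} \<and> {w. f w \<noteq> 0} \<subseteq> Kcone vs n \<inter> lattice}"

definition CKint :: "(nat \<Rightarrow> real^'d) \<Rightarrow> nat \<Rightarrow> (real^'d \<Rightarrow> complex) set" where
  "CKint vs n = {f. finite {w. f w \<noteq> 0} \<and> {w. f w \<noteq> 0} \<subseteq> interior (Kcone vs n) \<inter> lattice}"

inductive_set Rsub :: "(nat \<Rightarrow> real^'d) \<Rightarrow> nat \<Rightarrow> (nat \<Rightarrow> real) \<Rightarrow> (real^'d \<Rightarrow> complex) set"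
  for vs n om where
  const: "(\<lambda>u. c * mono 0 u) \<in> Rsub vs n om"
| gen: "j < n \<Longrightarrow> ray vs j \<in> fan vs n om \<Longrightarrow> mono (vs j) \<in> Rsub vs n om"
| add: "f \<in> Rsub vs n om \<Longrightarrow> g \<in> Rsub vs n om \<Longrightarrow> (\<lambda>u. f u + g u) \<in> Rsub vs n om"
| mult: "f \<in> Rsub vs n om \<Longrightarrow> g \<in> Rsub vs n om \<Longrightarrow> kmult vs n om f g \<in> Rsub vs n om"

inductive_set Rspan :: "(nat \<Rightarrow> real^'d) \<Rightarrow> nat \<Rightarrow> (nat \<Rightarrow> real) \<Rightarrow> (real^'d \<Rightarrow> complex) set
     \<Rightarrow> (real^'d \<Rightarrow> complex) set"
  for vs n om G where
  zero: "(\<lambda>u. 0) \<in> Rspan vs n om G"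
| smul: "r \<in> Rsub vs n om \<Longrightarrow> g \<in> G \<Longrightarrow> kmult vs n om r g \<in> Rspan vs n om G"
| add: "f \<in> Rspan vs n om G \<Longrightarrow> g \<in> Rspan vs n om G \<Longrightarrow> (\<lambda>u. f u + g u) \<in> Rspan vs n om G"

definition sigma_of :: "(nat \<Rightarrow> real^'d) \<Rightarrow> nat \<Rightarrow> (nat \<Rightarrow> real) \<Rightarrow> real^'d \<Rightarrow> (real^'d) set" where
  "sigma_of vs n om x = (THE \<sigma>. \<sigma> \<in> fan vs n om \<and> x \<in> \<sigma> \<and>
       (\<forall>\<tau> \<in> fan vs n om. x \<in> \<tau> \<longrightarrow> \<sigma> \<subseteq> \<tau>))"

definition maximal_cone :: "(nat \<Rightarrow> real^'d) \<Rightarrow> nat \<Rightarrow> (nat \<Rightarrow> real) \<Rightarrow> (real^'d) set \<Rightarrow> bool" where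
  "maximal_cone vs n om \<sigma> \<longleftrightarrow> \<sigma> \<in> fan vs n om \<and> (\<forall>\<tau> \<in> fan vs n om. \<sigma> \<subseteq> \<tau> \<longrightarrow> \<tau> = \<sigma>)"

definition Box :: "(nat \<Rightarrow> real^'d) \<Rightarrow> nat \<Rightarrow> (nat \<Rightarrow> real) \<Rightarrow> (real^'d) set" where
  "Box vs n om = {x \<in> lattice. \<exists>\<sigma>. maximal_cone vs n om \<sigma> \<and>
      (\<exists>q. x = (\<Sum>j<n. q j *\<^sub>R vs j) \<and> (\<forall>j<n. 0 \<le> q j \<and> q j < 1)
           \<and> (\<forall>j<n. q j \<noteq> 0 \<longrightarrow> ray vs j face_of \<sigma>))}"

definition Mgens :: "(nat \<Rightarrow> real^'d) \<Rightarrow> nat \<Rightarrow> (nat \<Rightarrow> real) \<Rightarrow> real^'d \<Rightarrow> (real^'d \<Rightarrow> complex) set" where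
  "Mgens vs n om \<beta> =
     {kmult vs n om (mono x)
        (kprod_list vs n om (map (\<lambda>j. mono (vs j))
           (sorted_list_of_set {j. j < n \<and> r j < 0 \<and> ray vs j \<in> fan vs n om
                                   \<and> \<not> (ray vs j face_of sigma_of vs n om x)})))
      | x r. x \<in> Box vs n om \<and> x + (\<Sum>j<n. of_int (r j) *\<^sub>R vs j) = \<beta>
             \<and> (\<forall>j<n. ray vs j \<notin> fan vs n om \<longrightarrow> r j \<ge> 0)}"

definition Mmod :: "(nat \<Rightarrow> real^'d) \<Rightarrow> nat \<Rightarrow> (nat \<Rightarrow> real) \<Rightarrow> real^'d \<Rightarrow> (real^'d \<Rightarrow> complex) set" where
  "Mmod vs n om \<beta> = Rspan vs n om (Mgens vs n om \<beta>)"

end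

theory Submission
  imports Defs
begin

(* Elements of R and the generators of M(beta) are supported on lattice points of cones of the
  fan, so M(beta) lies in C[K,Sigma].  Conversely, an interior lattice point w lies in a cone of
  the fan (the regular subdivision covers K: minimise the height of a representation of w and
  separate the lifted cone from the vertical ray below the minimum).  Write
  w = sum_{j in tau} c_j v_j with all c_j > 0 and let v = sum_j frac(c_j) v_j, a point of Box.
  Since sum_{j in tau} v_j is interior, every lattice point, in particular beta - v, is an integer
  combination of the v_j with nonnegative coefficients off tau.  The rays occurring in the
  resulting generator lie in tau but not in sigma(v), so w has integral coordinate c_j >= 1
  along them, and x^w is an R-multiple of the generator.
  If -beta is interior and the exponent y of a generator were a boundary point of K, a
  supporting functional xi >= 0 on K with xi(y) = 0 would vanish on v, on sigma(v) and on all
  v_j with r_j < 0, so xi(beta) >= 0, contradicting xi(-beta) > 0; multiplying by R keeps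
  supports interior since K + int K is contained in int K. *)

section \<open>Lattice points and convex cones\<close>

lemma lattice_zero [simp]: "0 \<in> lattice"
  by (simp add: lattice_def)

lemma lattice_add: "x \<in> lattice \<Longrightarrow> y \<in> lattice \<Longrightarrow> x + y \<in> lattice"
  by (simp add: lattice_def Ints_add)

lemma lattice_diff: "x \<in> lattice \<Longrightarrow> y \<in> lattice \<Longrightarrow> x - y \<in> lattice"
  by (simp add: lattice_def Ints_diff)

lemma lattice_of_int_scaleR: "x \<in> lattice \<Longrightarrow> of_int k *\<^sub>R x \<in> lattice"
  by (simp add: lattice_def Ints_mult)

lemma lattice_sum: "(\<And>a. a \<in> A \<Longrightarrow> f a \<in> lattice) \<Longrightarrow> sum f A \<in> lattice"
  by (induction A rule: infinite_finite_induct) (auto intro: lattice_add)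

lemma finite_lattice_norm_le: "finite {x \<in> (lattice :: (real^'n) set). norm x \<le> B}"
proof -
  define c where "c = \<lceil>B\<rceil>"
  have "{x \<in> lattice. norm x \<le> B} \<subseteq> (\<lambda>f. \<chi> i. of_int (f i)) ` (Pi\<^sub>E UNIV (\<lambda>_::'n. {-c..c}))"
  proof
    fix x :: "real^'n" assume x: "x \<in> {x \<in> lattice. norm x \<le> B}"
    define f where "f i = \<lfloor>x $ i\<rfloor>" for i
    have "x $ i = of_int (f i)" for i
      using x by (auto simp: f_def lattice_def elim!: Ints_cases)
    moreover have "f i \<in> {-c..c}" for i
    proof -
      have "\<bar>x $ i\<bar> \<le> B" using component_le_norm_cart[of x i] x by simp
      then show ?thesis
        unfolding f_def c_def by (simp add: floor_le_iff le_floor_iff) linarith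
    qed
    ultimately show "x \<in> (\<lambda>f. \<chi> i. of_int (f i)) ` (Pi\<^sub>E UNIV (\<lambda>_. {-c..c}))"
      by (intro image_eqI[of _ _ f]) (auto simp: vec_eq_iff)
  qed
  moreover have "finite (Pi\<^sub>E (UNIV::'n set) (\<lambda>_. {-c..c}))"
    by (intro finite_PiE) auto
  ultimately show ?thesis
    using finite_subset by blast
qed

lemma convex_cone_sum:
  "convex_cone K \<Longrightarrow> (\<And>a. a \<in> A \<Longrightarrow> f a \<in> K) \<Longrightarrow> sum f A \<in> K"
  by (induction A rule: infinite_finite_induct) (auto intro: convex_cone_add convex_cone_contains_0)

lemma sum_delta_scaleR:
  fixes v :: "'i \<Rightarrow> 'a::real_vector"
  shows "finite T \<Longrightarrow> j \<in> T \<Longrightarrow> (\<Sum>i\<in>T. (if i = j then 1 else 0) *\<^sub>R v i) = v j"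
  by (simp add: if_distrib[of "\<lambda>c. c *\<^sub>R _"] cong: if_cong)

lemma convex_cone_hull_finite_image:
  fixes f :: "'i \<Rightarrow> 'a::real_vector"
  assumes "finite S"
  shows "convex_cone hull (f ` S) = {\<Sum>j\<in>S. c j *\<^sub>R f j | c. \<forall>j\<in>S. 0 \<le> c j}"
    (is "_ = ?N")
proof
  have "convex_cone ?N"
  proof -
    have "(\<Sum>j\<in>S. c j *\<^sub>R f j) + (\<Sum>j\<in>S. d j *\<^sub>R f j) = (\<Sum>j\<in>S. (c j + d j) *\<^sub>R f j)"
      and "t *\<^sub>R (\<Sum>j\<in>S. c j *\<^sub>R f j) = (\<Sum>j\<in>S. (t * c j) *\<^sub>R f j)" for c d t
      by (simp_all add: scaleR_add_left sum.distrib scaleR_sum_right)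
    note sum_eq = this
    have "x + y \<in> ?N" "t *\<^sub>R x \<in> ?N" if xy: "x \<in> ?N" "y \<in> ?N" and "0 \<le> t" for x y t
    proof -
      obtain c d where c: "x = (\<Sum>j\<in>S. c j *\<^sub>R f j)" "\<forall>j\<in>S. 0 \<le> c j"
        and d: "y = (\<Sum>j\<in>S. d j *\<^sub>R f j)" "\<forall>j\<in>S. 0 \<le> d j"
        using xy by blast
      show "x + y \<in> ?N"
        using c d by (auto simp: sum_eq intro!: exI[of _ "\<lambda>j. c j + d j"])
      show "t *\<^sub>R x \<in> ?N"
        using c \<open>0 \<le> t\<close> by (auto simp: sum_eq intro!: exI[of _ "\<lambda>j. t * c j"])
    qed
    moreover have "0 \<in> ?N"
      by (auto intro!: exI[of _ "\<lambda>_. 0"])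
    ultimately show ?thesis
      unfolding convex_cone_iff by blast
  qed
  moreover have "f ` S \<subseteq> ?N"
  proof
    fix x assume "x \<in> f ` S"
    then obtain i where i: "i \<in> S" "x = f i" by blast
    then have "x = (\<Sum>j\<in>S. (if j = i then 1 else 0) *\<^sub>R f j)"
      using sum_delta_scaleR[OF assms, of i f] by simp
    then show "x \<in> ?N"
      by (intro CollectI exI[of _ "\<lambda>j. if j = i then 1 else 0"]) auto
  qed
  ultimately show "convex_cone hull (f ` S) \<subseteq> ?N"
    by (simp add: hull_minimal)
next
  show "?N \<subseteq> convex_cone hull (f ` S)"
  proof clarify
    fix c :: "'i \<Rightarrow> real" assume "\<forall>j\<in>S. 0 \<le> c j"
    then show "(\<Sum>j\<in>S. c j *\<^sub>R f j) \<in> convex_cone hull (f ` S)"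
      by (intro convex_cone_sum[OF convex_cone_convex_cone_hull] convex_cone_hull_mul hull_inc) auto
  qed
qed

lemma cone_of_eq_convex_cone_hull: "finite S \<Longrightarrow> cone_of vs S = convex_cone hull (vs ` S)"
  by (simp add: cone_of_def convex_cone_hull_finite_image)

lemma convex_cone_cone_of: "finite S \<Longrightarrow> convex_cone (cone_of vs S)"
  by (simp add: cone_of_eq_convex_cone_hull convex_cone_convex_cone_hull)

lemma convex_cone_of: "finite S \<Longrightarrow> convex (cone_of vs S)"
  using convex_cone_cone_of by (auto simp: convex_cone_def)

lemma zero_in_cone_of: "0 \<in> cone_of vs S"
  unfolding cone_of_def by (rule CollectI, rule exI[of _ "\<lambda>_. 0"]) simp

lemma cone_of_generator: "finite S \<Longrightarrow> j \<in> S \<Longrightarrow> vs j \<in> cone_of vs S"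
  by (simp add: cone_of_eq_convex_cone_hull hull_inc)

lemma cone_of_mono: "finite S \<Longrightarrow> T \<subseteq> S \<Longrightarrow> cone_of vs T \<subseteq> cone_of vs S"
  by (simp add: cone_of_eq_convex_cone_hull hull_mono image_mono finite_subset)

lemma cone_of_singleton: "cone_of vs {j} = ray vs j"
  by (auto simp: cone_of_def ray_def)

lemma Kcone_eq_cone_of:
  assumes "0 < n"
  shows "Kcone vs n = cone_of vs {..<n}"
proof -
  have "vs ` {..<n} \<noteq> {}"
    using assms by blast
  then show ?thesis
    by (auto simp: Kcone_def cone_of_eq_convex_cone_hull convex_cone_hull_convex_hull_nonempty)
qed

lemma inner_nonneg_cone_of:
  "(\<And>j. j \<in> S \<Longrightarrow> 0 \<le> a \<bullet> vs j) \<Longrightarrow> q \<in> cone_of vs S \<Longrightarrow> 0 \<le> a \<bullet> q"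
  by (auto simp: cone_of_def inner_sum_right intro!: sum_nonneg)

lemma inner_zero_cone_of:
  "(\<And>j. j \<in> S \<Longrightarrow> a \<bullet> vs j = 0) \<Longrightarrow> q \<in> cone_of vs S \<Longrightarrow> a \<bullet> q = 0"
  by (auto simp: cone_of_def inner_sum_right)

lemma convex_cone_add_interior:
  fixes K :: "'a::real_normed_vector set"
  assumes "convex_cone K" "a \<in> K" "b \<in> interior K"
  shows "a + b \<in> interior K"
proof -
  have "(+) a ` K \<subseteq> K"
    using convex_cone_add[OF assms(1,2)] by blast
  then have "interior ((+) a ` K) \<subseteq> interior K"
    by (rule interior_mono)
  then show ?thesis
    using assms(3) interior_translation[of a K] by blast
qed

lemma conic_scaleR_interior:
  fixes K :: "'a::euclidean_space set"
  assumes "conic K" "0 < c" "x \<in> interior K"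
  shows "c *\<^sub>R x \<in> interior K"
proof -
  have "(*\<^sub>R) c ` K \<subseteq> K"
    using conicD[OF assms(1)] assms(2) by auto
  then have "interior ((*\<^sub>R) c ` K) \<subseteq> interior K"
    by (rule interior_mono)
  moreover have "interior ((*\<^sub>R) c ` K) = (*\<^sub>R) c ` interior K"
    using assms(2) by (intro interior_injective_linear_image) (auto simp: linear_scaleR injective_scaleR)
  ultimately have "(*\<^sub>R) c ` interior K \<subseteq> interior K"
    by simp
  then show ?thesis using assms(3) by blast
qed

lemma inner_pos_interior:
  fixes a :: "'a::real_inner"
  assumes "\<And>q. q \<in> K \<Longrightarrow> 0 \<le> a \<bullet> q" "a \<noteq> 0" "p \<in> interior K"
  shows "0 < a \<bullet> p"
proof -
  obtain e where e: "e > 0" "ball p e \<subseteq> K"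
    using assms(3) mem_interior by blast
  define q where "q = p - (e / 2 / norm a) *\<^sub>R a"
  have "dist p q = e / 2"
    using assms(2) e(1) by (simp add: q_def dist_norm)
  then have "q \<in> K"
    using e by (simp add: subset_iff)
  then have "0 \<le> a \<bullet> q"
    by (rule assms(1))
  also have "a \<bullet> q = a \<bullet> p - e / 2 / norm a * (a \<bullet> a)"
    by (simp add: q_def inner_diff_right)
  also have "e / 2 / norm a * (a \<bullet> a) = e / 2 * norm a"
    using assms(2) by (simp add: dot_square_norm power2_eq_square)
  finally have "e / 2 * norm a \<le> a \<bullet> p"
    by simp
  moreover have "0 < e / 2 * norm a"
    using assms(2) e(1) by simp
  ultimately show ?thesis
    by linarith
qed

lemma convex_cone_supporting_functional:
  fixes K :: "'a::euclidean_space set"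
  assumes "convex_cone K" "interior K \<noteq> {}" "y \<in> K" "y \<notin> interior K"
  obtains \<xi> where "\<xi> \<bullet> y = 0" "\<And>q. q \<in> K \<Longrightarrow> 0 \<le> \<xi> \<bullet> q"
    "\<And>q. q \<in> interior K \<Longrightarrow> 0 < \<xi> \<bullet> q"
proof -
  have "convex K" "y \<notin> rel_interior K"
    using assms by (simp_all add: convex_cone_def rel_interior_nonempty_interior)
  then obtain \<xi> where \<xi>: "\<And>q. q \<in> K \<Longrightarrow> \<xi> \<bullet> y \<le> \<xi> \<bullet> q"
    "\<And>q. q \<in> interior K \<Longrightarrow> \<xi> \<bullet> y < \<xi> \<bullet> q"
    using supporting_hyperplane_rel_boundary[of K y] assms(2,3)
    by (metis rel_interior_nonempty_interior)
  have "\<xi> \<bullet> y \<le> \<xi> \<bullet> 0"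
    by (rule \<xi>(1)) (rule convex_cone_contains_0[OF assms(1)])
  moreover have "\<xi> \<bullet> y \<le> \<xi> \<bullet> (2 *\<^sub>R y)"
    by (rule \<xi>(1)) (rule convex_cone_scaleR[OF assms(1) _ assms(3)], simp)
  ultimately have "\<xi> \<bullet> y = 0" by simp
  with \<xi> show ?thesis using that by auto
qed

lemma conic_inner_nonneg:
  fixes \<xi> :: "'a::real_inner"
  assumes "conic P" "\<And>z. z \<in> P \<Longrightarrow> b \<le> \<xi> \<bullet> z" "z \<in> P"
  shows "0 \<le> \<xi> \<bullet> z"
proof (rule ccontr)
  assume neg: "\<not> 0 \<le> \<xi> \<bullet> z"
  define c where "c = (\<bar>b\<bar> + 1) / - (\<xi> \<bullet> z)"
  have "0 \<le> c"
    unfolding c_def using neg by (intro divide_nonneg_pos) auto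
  then have "b \<le> \<xi> \<bullet> (c *\<^sub>R z)"
    by (intro assms(2) conicD[OF assms(1) assms(3)])
  moreover have "\<xi> \<bullet> (c *\<^sub>R z) = - (\<bar>b\<bar> + 1)"
    using neg by (simp add: c_def)
  ultimately show False by linarith
qed

lemma affine_nonpos_below:
  fixes u \<sigma> m :: real
  assumes "\<And>s. s < m \<Longrightarrow> u + \<sigma> * s \<le> 0"
  shows "0 \<le> \<sigma>" "u + \<sigma> * m \<le> 0"
proof -
  show "0 \<le> \<sigma>"
  proof (rule ccontr)
    assume "\<not> 0 \<le> \<sigma>"
    define X where "X = \<bar>u\<bar> + \<bar>\<sigma> * m\<bar> + 1"
    have "X / - \<sigma> > 0"
      using \<open>\<not> 0 \<le> \<sigma>\<close> unfolding X_def by (intro divide_pos_pos) auto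
    then have "u + \<sigma> * (m - 1 - X / - \<sigma>) \<le> 0"
      by (intro assms) simp
    moreover have "\<sigma> * (m - 1 - X / - \<sigma>) = \<sigma> * m - \<sigma> + X"
      using \<open>\<not> 0 \<le> \<sigma>\<close> by (simp add: algebra_simps)
    ultimately show False
      using \<open>\<not> 0 \<le> \<sigma>\<close> by (simp add: X_def)
  qed
  show "u + \<sigma> * m \<le> 0"
  proof (rule ccontr)
    define d where "d = u + \<sigma> * m"
    assume "\<not> u + \<sigma> * m \<le> 0"
    then have "d > 0" by (simp add: d_def)
    then have "u + \<sigma> * (m - d / (2 * \<sigma> + 2)) \<le> 0"
      using \<open>0 \<le> \<sigma>\<close> by (intro assms) simp
    moreover have "\<sigma> * (d / (2 * \<sigma> + 2)) \<le> d / 2"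
      using \<open>0 \<le> \<sigma>\<close> \<open>d > 0\<close> by (simp add: field_simps)
    ultimately show False
      using \<open>d > 0\<close> by (simp add: d_def right_diff_distrib)
  qed
qed

lemma inner_sum_le_heights:
  fixes vs :: "'i \<Rightarrow> 'a::real_inner"
  assumes "\<And>j. j \<in> S \<Longrightarrow> a \<bullet> vs j \<le> om j" "\<And>j. j \<in> S \<Longrightarrow> 0 \<le> c j"
  shows "a \<bullet> (\<Sum>j\<in>S. c j *\<^sub>R vs j) \<le> (\<Sum>j\<in>S. c j * om j)"
  unfolding inner_sum_right inner_scaleR_right by (intro sum_mono mult_left_mono assms)

lemma inner_sum_eq_heights_on_support:
  fixes vs :: "'i \<Rightarrow> 'a::real_inner"
  assumes "finite S" "\<And>j. j \<in> S \<Longrightarrow> a \<bullet> vs j \<le> om j" "\<And>j. j \<in> S \<Longrightarrow> 0 \<le> c j"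
    and "a \<bullet> (\<Sum>j\<in>S. c j *\<^sub>R vs j) = (\<Sum>j\<in>S. c j * om j)" "j \<in> S" "c j \<noteq> 0"
  shows "a \<bullet> vs j = om j"
proof -
  have "(\<Sum>j\<in>S. c j * (om j - a \<bullet> vs j))
      = (\<Sum>j\<in>S. c j * om j) - a \<bullet> (\<Sum>j\<in>S. c j *\<^sub>R vs j)"
    by (simp add: inner_sum_right right_diff_distrib sum_subtractf)
  also have "\<dots> = 0"
    using assms(4) by simp
  finally have "(\<Sum>j\<in>S. c j * (om j - a \<bullet> vs j)) = 0" .
  moreover have "0 \<le> c j * (om j - a \<bullet> vs j)" if "j \<in> S" for j
    using assms(2,3)[OF that] by simp
  ultimately have "c j * (om j - a \<bullet> vs j) = 0"
    using sum_nonneg_eq_0_iff[OF assms(1), of "\<lambda>j. c j * (om j - a \<bullet> vs j)"] assms(5)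
    by blast
  then show ?thesis
    using assms(6) by simp
qed

lemma nonneg_add_sum_eq_zero:
  fixes a :: real
  assumes "finite J" "0 \<le> a" "\<forall>j\<in>J. 0 \<le> f j" "a + sum f J = 0"
  shows "a = 0" "\<forall>j\<in>J. f j = 0"
proof -
  have "0 \<le> sum f J"
    using assms(3) by (simp add: sum_nonneg)
  then have "a = 0" "sum f J = 0"
    using assms(2,4) by linarith+
  then show "a = 0" "\<forall>j\<in>J. f j = 0"
    using sum_nonneg_eq_0_iff[OF assms(1), of f] assms(3) by auto
qed

lemma independent_dual_vector:
  fixes B :: "(real^'d) set"
  assumes "independent B"
  obtains b where "\<And>x. x \<in> B \<Longrightarrow> b \<bullet> x = f x"
proof -
  obtain g :: "real^'d \<Rightarrow> real" where "linear g" "\<And>x. x \<in> B \<Longrightarrow> g x = f x"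
    using linear_independent_extend[OF assms, of f] by blast
  then have "adjoint g 1 \<bullet> x = f x" if "x \<in> B" for x
    using adjoint_works[of g x 1] that by (simp add: inner_commute)
  then show ?thesis using that by blast
qed

lemma sum_Pair: "(\<Sum>j\<in>A. (f j, g j)) = (sum f A, sum g A)"
  by (simp add: prod_eq_iff fst_sum snd_sum)

lemma sum_lessThan_restrict:
  fixes v :: "nat \<Rightarrow> 'a::real_vector"
  assumes "A \<subseteq> {..<n}"
  shows "(\<Sum>j<n. (if j \<in> A then f j else 0) *\<^sub>R v j) = (\<Sum>j\<in>A. f j *\<^sub>R v j)"
proof -
  have "(\<Sum>j<n. (if j \<in> A then f j else 0) *\<^sub>R v j) = (\<Sum>j<n. if j \<in> A then f j *\<^sub>R v j else 0)"
    by (intro sum.cong) auto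
  also have "\<dots> = (\<Sum>j\<in>{..<n} \<inter> A. f j *\<^sub>R v j)"
    by (rule sum.inter_restrict[symmetric]) simp
  finally show ?thesis
    using assms by (simp add: Int_absorb1)
qed

lemma sum_floor_frac_split:
  fixes v :: "'i \<Rightarrow> 'a::real_vector"
  assumes "finite T" "J \<subseteq> T" "\<forall>j\<in>T. 0 \<le> c j" "\<forall>j\<in>J. 1 \<le> c j"
  shows "(\<Sum>j\<in>T. c j *\<^sub>R v j) = (\<Sum>j\<in>T. of_nat (nat \<lfloor>c j\<rfloor> - (if j \<in> J then 1 else 0)) *\<^sub>R v j)
           + ((\<Sum>j\<in>T. frac (c j) *\<^sub>R v j) + (\<Sum>j\<in>J. v j))"
proof -
  have "c j *\<^sub>R v j = of_nat (nat \<lfloor>c j\<rfloor> - (if j \<in> J then 1 else 0)) *\<^sub>R v j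
      + frac (c j) *\<^sub>R v j + (if j \<in> J then v j else 0)" if "j \<in> T" for j
  proof -
    have "c j = of_nat (nat \<lfloor>c j\<rfloor> - (if j \<in> J then 1 else 0)) + frac (c j) + (if j \<in> J then 1 else 0)"
    proof (cases "j \<in> J")
      case True
      then have "1 \<le> c j"
        using assms(4) by blast
      then have "1 \<le> nat \<lfloor>c j\<rfloor>"
        by linarith
      then have "real (nat \<lfloor>c j\<rfloor> - 1) = of_int \<lfloor>c j\<rfloor> - 1"
        by (simp add: of_nat_diff)
      then show ?thesis
        using True by (simp add: frac_def)
    next
      case False
      then have "0 \<le> \<lfloor>c j\<rfloor>"
        using assms(3) that by simp
      then show ?thesis
        using False by (simp add: frac_def)
    qed
    from arg_cong[where f = "\<lambda>t. t *\<^sub>R v j", OF this] show ?thesis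
      by (simp only: scaleR_add_left) simp
  qed
  then have "(\<Sum>j\<in>T. c j *\<^sub>R v j) = (\<Sum>j\<in>T. of_nat (nat \<lfloor>c j\<rfloor> - (if j \<in> J then 1 else 0)) *\<^sub>R v j
      + frac (c j) *\<^sub>R v j + (if j \<in> J then v j else 0))"
    by (rule sum.cong[OF refl])
  also have "\<dots> = (\<Sum>j\<in>T. of_nat (nat \<lfloor>c j\<rfloor> - (if j \<in> J then 1 else 0)) *\<^sub>R v j)
      + ((\<Sum>j\<in>T. frac (c j) *\<^sub>R v j) + (\<Sum>j\<in>J. v j))"
    using assms(1,2) by (simp add: sum.distrib sum.If_cases Int_absorb1)
  finally show ?thesis .
qed

section \<open>The ring C[K,Sigma]\<close>

definition finsupp_in :: "'a set \<Rightarrow> ('a \<Rightarrow> 'b::zero) \<Rightarrow> bool" where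
  "finsupp_in X f \<longleftrightarrow> finite {w. f w \<noteq> 0} \<and> {w. f w \<noteq> 0} \<subseteq> X"

lemma finsupp_in_zero: "finsupp_in X (\<lambda>_. 0)"
  by (simp add: finsupp_in_def)

lemma finsupp_in_subset: "finsupp_in X f \<Longrightarrow> X \<subseteq> Y \<Longrightarrow> finsupp_in Y f"
  by (auto simp: finsupp_in_def)

lemma finsupp_in_add:
  fixes f g :: "'a \<Rightarrow> 'b::monoid_add"
  assumes "finsupp_in X f" "finsupp_in X g"
  shows "finsupp_in X (\<lambda>u. f u + g u)"
proof -
  have "{w. f w + g w \<noteq> 0} \<subseteq> {w. f w \<noteq> 0} \<union> {w. g w \<noteq> 0}"
    by auto
  moreover have "finite ({w. f w \<noteq> 0} \<union> {w. g w \<noteq> 0})" "{w. f w \<noteq> 0} \<union> {w. g w \<noteq> 0} \<subseteq> X"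
    using assms by (simp_all add: finsupp_in_def)
  ultimately show ?thesis
    unfolding finsupp_in_def using finite_subset by blast
qed

lemma finsupp_in_subsetmial: "x \<in> X \<Longrightarrow> finsupp_in X (mono x)"
  by (simp add: finsupp_in_def mono_def)

lemma kmult_nonzeroE:
  assumes "kmult vs n om f g w \<noteq> 0"
  obtains a b where "f a \<noteq> 0" "g b \<noteq> 0" "w = a + b" "compat vs n om a b"
proof -
  have "{(a, b). f a \<noteq> 0 \<and> g b \<noteq> 0 \<and> a + b = w \<and> compat vs n om a b} \<noteq> {}"
  proof
    assume "{(a, b). f a \<noteq> 0 \<and> g b \<noteq> 0 \<and> a + b = w \<and> compat vs n om a b} = {}"
    then have "kmult vs n om f g w = 0"
      unfolding kmult_def by (simp only: sum.empty)
    with assms show False ..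
  qed
  then show ?thesis
    using that by auto
qed

lemma kmult_finsupp_in:
  assumes "finsupp_in X f" "finsupp_in Y g"
    and "\<And>a b. a \<in> X \<Longrightarrow> b \<in> Y \<Longrightarrow> compat vs n om a b \<Longrightarrow> a + b \<in> Z"
  shows "finsupp_in Z (kmult vs n om f g)"
proof -
  let ?A = "{w. f w \<noteq> 0}" and ?B = "{w. g w \<noteq> 0}"
  have "{w. kmult vs n om f g w \<noteq> 0} \<subseteq> (\<lambda>(a, b). a + b) ` (?A \<times> ?B)"
    by (force elim: kmult_nonzeroE)
  moreover have "finite ((\<lambda>(a, b). a + b) ` (?A \<times> ?B))"
    using assms(1,2) by (simp add: finsupp_in_def)
  moreover have "{w. kmult vs n om f g w \<noteq> 0} \<subseteq> Z"
    using assms by (force simp: finsupp_in_def elim: kmult_nonzeroE)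
  ultimately show ?thesis
    by (auto simp: finsupp_in_def intro: finite_subset)
qed

lemma kmult_scaled_monomials:
  "kmult vs n om (\<lambda>u. c * mono a u) (mono b)
     = (if compat vs n om a b then (\<lambda>u. c * mono (a + b) u) else (\<lambda>_. 0))"
proof (cases "c = 0")
  case False
  have "{(a', b'). c * mono a a' \<noteq> 0 \<and> mono b b' \<noteq> 0 \<and> a' + b' = w \<and> compat vs n om a' b'}
      = (if a + b = w \<and> compat vs n om a b then {(a, b)} else {})" for w
    using False by (auto simp: mono_def)
  then show ?thesis
    by (auto simp: kmult_def mono_def)
qed (simp add: kmult_def)

lemma kmult_monomials:
  "kmult vs n om (mono a) (mono b) = (if compat vs n om a b then mono (a + b) else (\<lambda>_. 0))"
  using kmult_scaled_monomials[of vs n om 1 a b] by simp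

lemma cells_subset: "S \<in> cells vs n om \<Longrightarrow> S \<subseteq> {..<n}"
  by (auto simp: cells_def)

lemma finite_cell: "S \<in> cells vs n om \<Longrightarrow> finite S"
  using cells_subset finite_lessThan by (rule finite_subset)

lemma compat_cone_of:
  "S \<in> cells vs n om \<Longrightarrow> a \<in> cone_of vs S \<Longrightarrow> b \<in> cone_of vs S \<Longrightarrow> compat vs n om a b"
  unfolding compat_def fan_def by blast

lemma kprod_list_monomials_support:
  "{w. kprod_list vs n om (map (\<lambda>j. mono (vs j)) js) w \<noteq> 0} \<subseteq> {sum_list (map vs js)}"
proof (induction js)
  case Nil
  then show ?case by (auto simp: kprod_list_def mono_def)
next
  case (Cons j js)
  show ?case
  proof
    fix w assume "w \<in> {w. kprod_list vs n om (map (\<lambda>j. mono (vs j)) (j # js)) w \<noteq> 0}"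
    then have "kmult vs n om (mono (vs j)) (kprod_list vs n om (map (\<lambda>j. mono (vs j)) js)) w \<noteq> 0"
      by (simp add: kprod_list_def)
    then obtain a b where a: "mono (vs j) a \<noteq> 0"
      and b: "kprod_list vs n om (map (\<lambda>j. mono (vs j)) js) b \<noteq> 0" and "w = a + b"
      by (rule kmult_nonzeroE)
    moreover have "a = vs j"
      using a by (simp add: mono_def split: if_splits)
    moreover have "b = sum_list (map vs js)"
      using b Cons.IH by blast
    ultimately show "w \<in> {sum_list (map vs (j # js))}"
      by simp
  qed
qed

lemma sum_list_in_cone_of:
  "finite S \<Longrightarrow> set js \<subseteq> S \<Longrightarrow> sum_list (map vs js) \<in> cone_of vs S"
proof (induction js)
  case Nil
  then show ?case
    by (simp add: zero_in_cone_of)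
next
  case (Cons j js)
  then show ?case
    by (simp add: convex_cone_add convex_cone_cone_of cone_of_generator)
qed

lemma kprod_list_monomials_in_cell:
  assumes "S \<in> cells vs n om" "set js \<subseteq> S"
  shows "kprod_list vs n om (map (\<lambda>j. mono (vs j)) js) = mono (sum_list (map vs js))"
  using assms(2)
proof (induction js)
  case Nil
  then show ?case by (simp add: kprod_list_def)
next
  case (Cons j js)
  then have "compat vs n om (vs j) (sum_list (map vs js))"
    using finite_cell[OF assms(1)]
    by (intro compat_cone_of[OF assms(1)] sum_list_in_cone_of cone_of_generator) auto
  with Cons show ?case
    by (simp add: kprod_list_def kmult_monomials)
qed

lemma Rspan_sum:
  "finite W \<Longrightarrow> (\<And>w. w \<in> W \<Longrightarrow> h w \<in> Rspan vs n om G)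
    \<Longrightarrow> (\<lambda>u. \<Sum>w\<in>W. h w u) \<in> Rspan vs n om G"
proof (induction W rule: finite_induct)
  case empty
  then show ?case
    by (simp add: Rspan.zero)
next
  case (insert w W)
  then have "(\<lambda>u. h w u + (\<Sum>w\<in>W. h w u)) \<in> Rspan vs n om G"
    by (intro Rspan.add) auto
  with insert(1,2) show ?case
    by simp
qed

section \<open>Regular triangulations\<close>

locale regular_fan =
  fixes vs :: "nat \<Rightarrow> real^'d" and n :: nat and hc :: "real^'d" and om :: "nat \<Rightarrow> real"
  assumes n_pos: "0 < n"
    and h_one: "\<forall>j<n. hc \<bullet> vs j = 1"
    and triang: "regular_triangulation vs n om"
begin

abbreviation "Cells \<equiv> cells vs n om"
abbreviation "Fan \<equiv> fan vs n om"
abbreviation "K \<equiv> cone_of vs {..<n}"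

lemma cellE:
  assumes "S \<in> Cells"
  obtains a where "S = {j \<in> {..<n}. a \<bullet> vs j = om j}" "\<forall>j<n. a \<bullet> vs j \<le> om j"
  using assms by (auto simp: cells_def)

lemma cellI: "\<forall>j<n. a \<bullet> vs j \<le> om j \<Longrightarrow> {j \<in> {..<n}. a \<bullet> vs j = om j} \<in> Cells"
  by (auto simp: cells_def)

lemma cell_dual_vector:
  assumes "S \<in> Cells"
  obtains b where "\<And>j. j \<in> S \<Longrightarrow> b \<bullet> vs j = f j"
proof -
  have ind: "independent (vs ` S)" and inj: "inj_on vs S"
    using assms triang by (auto simp: regular_triangulation_def)
  obtain b where b: "\<And>x. x \<in> vs ` S \<Longrightarrow> b \<bullet> x = f (the_inv_into S vs x)"
    using independent_dual_vector[OF ind, where f = "\<lambda>x. f (the_inv_into S vs x)"] by blast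
  have "b \<bullet> vs j = f j" if "j \<in> S" for j
    using b[of "vs j"] inj that by (simp add: the_inv_into_f_f)
  then show ?thesis
    by (rule that)
qed

lemma cell_coeffs_unique:
  assumes "S \<in> Cells" "(\<Sum>i\<in>S. c i *\<^sub>R vs i) = (\<Sum>i\<in>S. d i *\<^sub>R vs i)" "j \<in> S"
  shows "c j = d j"
proof -
  obtain b where b: "\<And>i. i \<in> S \<Longrightarrow> b \<bullet> vs i = (if i = j then 1 else 0)"
    using cell_dual_vector[OF assms(1), where f = "\<lambda>i. if i = j then 1 else 0"] by blast
  have "b \<bullet> (\<Sum>i\<in>S. c i *\<^sub>R vs i) = c j" for c
    using b assms(3) finite_cell[OF assms(1)]
    by (simp add: inner_sum_right if_distrib[of "(*) _"] cong: if_cong)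
  from this[of c] this[of d] show ?thesis
    using assms(2) by simp
qed

lemma cell_subset_cell:
  assumes "S \<in> Cells" "S' \<subseteq> S"
  shows "S' \<in> Cells"
proof -
  obtain a where S: "S = {j \<in> {..<n}. a \<bullet> vs j = om j}" and a: "\<forall>j<n. a \<bullet> vs j \<le> om j"
    using assms(1) by (rule cellE)
  obtain b where b: "\<And>j. j \<in> S \<Longrightarrow> b \<bullet> vs j = (if j \<in> S' then 0 else 1)"
    using cell_dual_vector[OF assms(1), where f = "\<lambda>j. if j \<in> S' then 0 else 1"] by blast
  \<comment> \<open>Tilting the supporting functional a slightly along b keeps it below the heights off S.\<close>
  have "\<forall>\<^sub>F t in at_right 0. \<forall>j\<in>{..<n} - S. (a - t *\<^sub>R b) \<bullet> vs j < om j"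
  proof (intro eventually_ball_finite ballI)
    fix j assume "j \<in> {..<n} - S"
    then have "a \<bullet> vs j < om j"
      using a S by force
    moreover have "((\<lambda>t. (a - t *\<^sub>R b) \<bullet> vs j) \<longlongrightarrow> a \<bullet> vs j) (at_right 0)"
      by (auto simp: inner_diff_left intro!: tendsto_eq_intros)
    ultimately show "\<forall>\<^sub>F t in at_right 0. (a - t *\<^sub>R b) \<bullet> vs j < om j"
      by (simp add: order_tendstoD(2))
  qed simp
  with eventually_at_right_less
  have "\<forall>\<^sub>F t in at_right 0. 0 < t \<and> (\<forall>j\<in>{..<n} - S. (a - t *\<^sub>R b) \<bullet> vs j < om j)"
    by (rule eventually_conj)
  then obtain t where t: "0 < t" "\<forall>j\<in>{..<n} - S. (a - t *\<^sub>R b) \<bullet> vs j < om j"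
    using eventually_happens'[OF trivial_limit_at_right_real] by blast
  define a' where "a' = a - t *\<^sub>R b"
  have on_S: "a' \<bullet> vs j = om j - (if j \<in> S' then 0 else t)" if "j \<in> S" for j
    using that b S by (auto simp: a'_def inner_diff_left)
  have off_S: "a' \<bullet> vs j < om j" if "j < n" "j \<notin> S" for j
    using t(2) that by (simp add: a'_def)
  have "\<forall>j<n. a' \<bullet> vs j \<le> om j"
  proof (intro allI impI)
    fix j assume "j < n"
    show "a' \<bullet> vs j \<le> om j"
      using on_S[of j] off_S[OF \<open>j < n\<close>] t(1) by (cases "j \<in> S") auto
  qed
  moreover have "S' = {j \<in> {..<n}. a' \<bullet> vs j = om j}"
  proof (intro set_eqI iffI)
    fix j assume "j \<in> S'"
    with assms(2) S on_S[of j] show "j \<in> {j \<in> {..<n}. a' \<bullet> vs j = om j}"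
      by auto
  next
    fix j assume j: "j \<in> {j \<in> {..<n}. a' \<bullet> vs j = om j}"
    then have "j \<in> S"
      using off_S[of j] by auto
    with j on_S[of j] t(1) show "j \<in> S'"
      by (auto split: if_splits)
  qed
  ultimately show ?thesis
    using cellI[of a'] by simp
qed

lemma finite_Cells: "finite Cells"
  by (rule finite_subset[of _ "Pow {..<n}"]) (auto dest: cells_subset)

lemma Kcone_eq: "Kcone vs n = K"
  using n_pos by (rule Kcone_eq_cone_of)

lemma convex_cone_K: "convex_cone K"
  by (simp add: convex_cone_cone_of)

lemma conic_K: "conic K"
  using convex_cone_K by (simp add: convex_cone_def)

lemma cell_cone_subset_K: "S \<in> Cells \<Longrightarrow> cone_of vs S \<subseteq> K"
  by (simp add: cone_of_mono cells_subset)

lemma cone_of_Int_cells: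
  assumes "S1 \<in> Cells" "S2 \<in> Cells"
  shows "cone_of vs S1 \<inter> cone_of vs S2 = cone_of vs (S1 \<inter> S2)"
proof
  show "cone_of vs (S1 \<inter> S2) \<subseteq> cone_of vs S1 \<inter> cone_of vs S2"
    using assms by (simp add: cone_of_mono finite_cell)
next
  show "cone_of vs S1 \<inter> cone_of vs S2 \<subseteq> cone_of vs (S1 \<inter> S2)"
  proof
    fix p assume p: "p \<in> cone_of vs S1 \<inter> cone_of vs S2"
    then obtain c1 where p1: "p = (\<Sum>j\<in>S1. c1 j *\<^sub>R vs j)" "\<forall>j\<in>S1. 0 \<le> c1 j"
      unfolding cone_of_def by blast
    obtain c2 where p2: "p = (\<Sum>j\<in>S2. c2 j *\<^sub>R vs j)" "\<forall>j\<in>S2. 0 \<le> c2 j"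
      using p unfolding cone_of_def by blast
    obtain a1 where S1: "S1 = {j \<in> {..<n}. a1 \<bullet> vs j = om j}" and a1: "\<forall>j<n. a1 \<bullet> vs j \<le> om j"
      using assms(1) by (rule cellE)
    obtain a2 where S2: "S2 = {j \<in> {..<n}. a2 \<bullet> vs j = om j}" and a2: "\<forall>j<n. a2 \<bullet> vs j \<le> om j"
      using assms(2) by (rule cellE)
    \<comment> \<open>Both representations of p have minimal height, each being tight for a supporting functional.\<close>
    have "a1 \<bullet> p = (\<Sum>j\<in>S1. c1 j * om j)"
      using S1 by (auto simp: p1(1) inner_sum_right intro!: sum.cong)
    moreover have "a2 \<bullet> p = (\<Sum>j\<in>S2. c2 j * om j)"
      using S2 by (auto simp: p2(1) inner_sum_right intro!: sum.cong)
    moreover have "a1 \<bullet> p \<le> (\<Sum>j\<in>S2. c2 j * om j)"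
      unfolding p2(1) using a1 p2(2) S2 by (intro inner_sum_le_heights) auto
    moreover have "a2 \<bullet> p \<le> (\<Sum>j\<in>S1. c1 j * om j)"
      unfolding p1(1) using a2 p1(2) S1 by (intro inner_sum_le_heights) auto
    ultimately have "a1 \<bullet> p = (\<Sum>j\<in>S2. c2 j * om j)"
      by linarith
    then have tight: "a1 \<bullet> (\<Sum>j\<in>S2. c2 j *\<^sub>R vs j) = (\<Sum>j\<in>S2. c2 j * om j)"
      by (simp only: p2(1))
    have "j \<in> S1" if "j \<in> S2" "c2 j \<noteq> 0" for j
      using inner_sum_eq_heights_on_support[OF finite_cell[OF assms(2)] _ _ tight that] that(1) a1 p2(2) S1 S2
      by auto
    then have "p = (\<Sum>j\<in>S1 \<inter> S2. c2 j *\<^sub>R vs j)"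
      unfolding p2(1) using finite_cell[OF assms(2)]
      by (intro sum.mono_neutral_cong_right) auto
    with p2(2) show "p \<in> cone_of vs (S1 \<inter> S2)"
      by (auto simp: cone_of_def)
  qed
qed

lemma cell_support_subset:
  assumes "T \<in> Cells" "T' \<in> Cells" "\<forall>i\<in>T. 0 \<le> c i" "(\<Sum>i\<in>T. c i *\<^sub>R vs i) \<in> cone_of vs T'"
    and "j \<in> T" "c j \<noteq> 0"
  shows "j \<in> T'"
proof -
  have "(\<Sum>i\<in>T. c i *\<^sub>R vs i) \<in> cone_of vs T"
    using assms(3) by (auto simp: cone_of_def)
  then have "(\<Sum>i\<in>T. c i *\<^sub>R vs i) \<in> cone_of vs (T \<inter> T')"
    using cone_of_Int_cells[OF assms(1,2)] assms(4) by blast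
  then obtain d where "(\<Sum>i\<in>T. c i *\<^sub>R vs i) = (\<Sum>i\<in>T \<inter> T'. d i *\<^sub>R vs i)"
    unfolding cone_of_def by blast
  also have "\<dots> = (\<Sum>i\<in>T. (if i \<in> T' then d i else 0) *\<^sub>R vs i)"
    using finite_cell[OF assms(1)] by (intro sum.mono_neutral_cong_left) auto
  finally have "c j = (if j \<in> T' then d j else 0)"
    by (rule cell_coeffs_unique[OF assms(1) _ assms(5)])
  with assms(6) show ?thesis
    by (auto split: if_splits)
qed

lemma cone_of_cells_subset_iff:
  assumes "T \<in> Cells" "S \<in> Cells"
  shows "cone_of vs T \<subseteq> cone_of vs S \<longleftrightarrow> T \<subseteq> S"
proof
  assume sub: "cone_of vs T \<subseteq> cone_of vs S"
  show "T \<subseteq> S"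
  proof
    fix j assume "j \<in> T"
    with assms(1) sub have "(\<Sum>i\<in>T. (if i = j then 1 else 0) *\<^sub>R vs i) \<in> cone_of vs S"
      by (metis finite_cell cone_of_generator sum_delta_scaleR subsetD)
    with assms \<open>j \<in> T\<close> show "j \<in> S"
      by (intro cell_support_subset[of T S]) auto
  qed
next
  assume "T \<subseteq> S"
  with finite_cell[OF assms(2)] show "cone_of vs T \<subseteq> cone_of vs S"
    by (rule cone_of_mono)
qed

lemma fanE:
  assumes "\<sigma> \<in> Fan"
  obtains S where "S \<in> Cells" "\<sigma> = cone_of vs S"
  using assms by (auto simp: fan_def)

lemma ray_face_of_cell:
  assumes "T \<in> Cells" "j \<in> T"
  shows "ray vs j face_of cone_of vs T"
proof -
  obtain b where b: "\<And>i. i \<in> T \<Longrightarrow> b \<bullet> vs i = (if i = j then 0 else 1)"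
    using cell_dual_vector[OF assms(1), where f = "\<lambda>i. if i = j then 0 else 1"] by blast
  have fin: "finite T"
    using assms(1) by (rule finite_cell)
  have "cone_of vs T \<inter> {x. b \<bullet> x = 0} = ray vs j"
  proof (intro equalityI subsetI)
    fix x assume x: "x \<in> cone_of vs T \<inter> {x. b \<bullet> x = 0}"
    then obtain c where c: "x = (\<Sum>i\<in>T. c i *\<^sub>R vs i)" "\<forall>i\<in>T. 0 \<le> c i"
      unfolding cone_of_def by blast
    have "c i = 0" if "i \<in> T" "i \<noteq> j" for i
    proof (rule ccontr)
      assume "c i \<noteq> 0"
      have "(- b) \<bullet> (\<Sum>i\<in>T. c i *\<^sub>R vs i) = (\<Sum>i\<in>T. c i * 0)"
        using x c(1) by simp
      moreover have "(- b) \<bullet> vs k \<le> 0" if "k \<in> T" for k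
        using b[OF that] by simp
      ultimately have "(- b) \<bullet> vs i = 0"
        using inner_sum_eq_heights_on_support[OF fin, of "- b" vs "\<lambda>_. 0" c i] c(2) that
          \<open>c i \<noteq> 0\<close> by auto
      then show False
        using b that by simp
    qed
    then have "x = (\<Sum>i\<in>T. if i = j then c j *\<^sub>R vs j else 0)"
      unfolding c(1) by (intro sum.cong) auto
    then have "x = c j *\<^sub>R vs j"
      using fin assms(2) by simp
    then show "x \<in> ray vs j"
      using c(2) assms(2) by (auto simp: ray_def)
  next
    fix x assume "x \<in> ray vs j"
    then obtain c where x: "x = c *\<^sub>R vs j" and "0 \<le> c"
      by (auto simp: ray_def)
    have "x \<in> cone_of vs T"
      unfolding x using convex_cone_cone_of[OF fin] \<open>0 \<le> c\<close> cone_of_generator[OF fin assms(2)]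
      by (rule convex_cone_scaleR)
    moreover have "b \<bullet> x = 0"
      using b[OF assms(2)] by (simp add: x)
    ultimately show "x \<in> cone_of vs T \<inter> {x. b \<bullet> x = 0}"
      by simp
  qed
  moreover have "cone_of vs T \<inter> {x. b \<bullet> x = 0} face_of cone_of vs T"
  proof (rule face_of_Int_supporting_hyperplane_ge)
    show "convex (cone_of vs T)"
      using fin by (rule convex_cone_of)
    show "0 \<le> b \<bullet> q" if "q \<in> cone_of vs T" for q
      using that by (rule inner_nonneg_cone_of[rotated]) (simp add: b)
  qed
  ultimately show ?thesis
    by simp
qed

lemma ray_in_Fan: "T \<in> Cells \<Longrightarrow> j \<in> T \<Longrightarrow> ray vs j \<in> Fan"
proof -
  assume "T \<in> Cells" "j \<in> T"
  then have "{j} \<in> Cells"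
    using cell_subset_cell[of T "{j}"] by simp
  then show "ray vs j \<in> Fan"
    unfolding fan_def cone_of_singleton[symmetric] by (rule imageI)
qed

lemma sigma_of_eq:
  assumes "S \<in> Cells" "\<forall>i\<in>S. 0 \<le> c i"
  shows "sigma_of vs n om (\<Sum>i\<in>S. c i *\<^sub>R vs i) = cone_of vs {i \<in> S. 0 < c i}"
proof -
  define T where "T = {i \<in> S. 0 < c i}"
  define x where "x = (\<Sum>i\<in>S. c i *\<^sub>R vs i)"
  have T: "T \<in> Cells"
    using cell_subset_cell[OF assms(1)] by (auto simp: T_def)
  have xT: "x = (\<Sum>i\<in>T. c i *\<^sub>R vs i)"
    unfolding x_def T_def using finite_cell[OF assms(1)] assms(2)
    by (intro sum.mono_neutral_cong_right) auto
  have "x \<in> cone_of vs T"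
    unfolding xT using assms(2) by (auto simp: cone_of_def T_def)
  moreover have "cone_of vs T \<subseteq> \<tau>" if \<tau>: "\<tau> \<in> Fan" "x \<in> \<tau>" for \<tau>
  proof -
    obtain T' where T': "T' \<in> Cells" "\<tau> = cone_of vs T'"
      using \<tau>(1) by (rule fanE)
    have "T \<subseteq> T'"
      using cell_support_subset[OF T T'(1), of c] \<tau>(2) assms(2) T'(2) xT
      by (auto simp: T_def)
    then show ?thesis
      using cone_of_cells_subset_iff[OF T T'(1)] T'(2) by simp
  qed
  moreover have "cone_of vs T \<in> Fan"
    using T by (simp add: fan_def)
  ultimately have least: "cone_of vs T \<in> Fan \<and> x \<in> cone_of vs T
      \<and> (\<forall>\<tau>\<in>Fan. x \<in> \<tau> \<longrightarrow> cone_of vs T \<subseteq> \<tau>)"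
    by blast
  have "sigma_of vs n om x = cone_of vs T"
    unfolding sigma_of_def
  proof (rule the_equality)
    fix \<sigma> assume "\<sigma> \<in> Fan \<and> x \<in> \<sigma> \<and> (\<forall>\<tau>\<in>Fan. x \<in> \<tau> \<longrightarrow> \<sigma> \<subseteq> \<tau>)"
    with least show "\<sigma> = cone_of vs T"
      by (intro subset_antisym) blast+
  qed (rule least)
  then show ?thesis
    by (simp add: x_def T_def)
qed

lemma cell_subset_maximal_cell:
  assumes "\<tau> \<in> Cells"
  obtains S where "S \<in> Cells" "\<tau> \<subseteq> S" "maximal_cone vs n om (cone_of vs S)"
proof -
  have fin_ne: "finite {S \<in> Cells. \<tau> \<subseteq> S}" "{S \<in> Cells. \<tau> \<subseteq> S} \<noteq> {}"
    using finite_Cells assms by auto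
  obtain S where S: "S \<in> {S \<in> Cells. \<tau> \<subseteq> S}"
    and max: "\<forall>S'\<in>{S \<in> Cells. \<tau> \<subseteq> S}. S \<subseteq> S' \<longrightarrow> S = S'"
    using finite_has_maximal[OF fin_ne] by blast
  have "maximal_cone vs n om (cone_of vs S)"
    unfolding maximal_cone_def
  proof (intro conjI ballI impI)
    show "cone_of vs S \<in> Fan"
      using S by (simp add: fan_def)
    fix \<sigma> assume \<sigma>: "\<sigma> \<in> Fan" and sub: "cone_of vs S \<subseteq> \<sigma>"
    obtain S' where S': "S' \<in> Cells" "\<sigma> = cone_of vs S'"
      using \<sigma> by (rule fanE)
    then have "S \<subseteq> S'"
      using cone_of_cells_subset_iff[of S S'] S sub by simp
    then have "S = S'"
      using max S S' by blast
    then show "\<sigma> = cone_of vs S"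
      using S' by simp
  qed
  with S show ?thesis
    using that by blast
qed

text \<open>The cells are the projections of the lower faces of this cone.\<close>

definition lifted_cone :: "((real^'d) \<times> real) set" where
  "lifted_cone = convex_cone hull ((\<lambda>j. (vs j, om j)) ` {..<n})"

lemma lifted_cone_eq:
  "lifted_cone = {(\<Sum>j<n. c j *\<^sub>R vs j, \<Sum>j<n. c j * om j) | c. \<forall>j<n. 0 \<le> c j}"
  by (simp add: lifted_cone_def convex_cone_hull_finite_image sum_Pair Ball_def)

lemma lifted_cone_memI:
  "\<forall>j<n. 0 \<le> c j \<Longrightarrow> (\<Sum>j<n. c j *\<^sub>R vs j, \<Sum>j<n. c j * om j) \<in> lifted_cone"
  by (auto simp: lifted_cone_eq)

lemma min_height_representation:
  assumes "p \<in> K"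
  obtains l where "\<forall>j<n. 0 \<le> l j" "p = (\<Sum>j<n. l j *\<^sub>R vs j)"
    "\<And>l'. \<forall>j<n. 0 \<le> l' j \<Longrightarrow> p = (\<Sum>j<n. l' j *\<^sub>R vs j)
       \<Longrightarrow> (\<Sum>j<n. l j * om j) \<le> (\<Sum>j<n. l' j * om j)"
proof -
  define H where "H = {s. (p, s) \<in> lifted_cone}"
  have H_iff: "s \<in> H \<longleftrightarrow> (\<exists>l. (\<forall>j<n. 0 \<le> l j) \<and> p = (\<Sum>j<n. l j *\<^sub>R vs j)
      \<and> s = (\<Sum>j<n. l j * om j))" for s
    by (auto simp: H_def lifted_cone_eq)
  have "closed H"
  proof -
    have "closed lifted_cone"
      by (simp add: lifted_cone_def closed_convex_cone_hull)
    then have "closed ((\<lambda>s. (p, s)) -` lifted_cone)"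
      by (rule continuous_closed_vimage) (intro continuous_intros)
    then show ?thesis
      by (simp add: H_def vimage_def)
  qed
  moreover have "H \<noteq> {}"
    using assms H_iff by (auto simp: cone_of_def)
  moreover have "bdd_below H"
  proof
    fix s assume "s \<in> H"
    then obtain l where l: "\<forall>j<n. 0 \<le> l j" "p = (\<Sum>j<n. l j *\<^sub>R vs j)" "s = (\<Sum>j<n. l j * om j)"
      using H_iff by blast
    \<comment> \<open>Since all generators lie on the hyperplane where hc is 1, every representation has the same total weight.\<close>
    have "hc \<bullet> p = (\<Sum>j<n. l j)"
      using h_one by (simp add: l(2) inner_sum_right)
    then have "Min (om ` {..<n}) * (hc \<bullet> p) = (\<Sum>j<n. Min (om ` {..<n}) * l j)"
      by (simp add: sum_distrib_left)
    also have "\<dots> \<le> s"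
      unfolding l(3) using l(1) by (intro sum_mono) (simp add: mult.commute mult_left_mono)
    finally show "Min (om ` {..<n}) * (hc \<bullet> p) \<le> s" .
  qed
  ultimately have "Inf H \<in> H"
    by (intro closed_contains_Inf)
  then obtain l where l: "\<forall>j<n. 0 \<le> l j" "p = (\<Sum>j<n. l j *\<^sub>R vs j)" "Inf H = (\<Sum>j<n. l j * om j)"
    using H_iff by blast
  have "(\<Sum>j<n. l j * om j) \<le> (\<Sum>j<n. l' j * om j)"
    if "\<forall>j<n. 0 \<le> l' j" "p = (\<Sum>j<n. l' j *\<^sub>R vs j)" for l'
    unfolding l(3)[symmetric] using that H_iff \<open>bdd_below H\<close> by (auto intro: cInf_lower)
  with l(1,2) show ?thesis
    using that by blast
qed

lemma lower_supporting_functional: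
  assumes p: "p \<in> interior K" and l: "\<forall>j<n. 0 \<le> l j" "p = (\<Sum>j<n. l j *\<^sub>R vs j)"
    and min: "\<And>l'. \<forall>j<n. 0 \<le> l' j \<Longrightarrow> p = (\<Sum>j<n. l' j *\<^sub>R vs j)
       \<Longrightarrow> (\<Sum>j<n. l j * om j) \<le> (\<Sum>j<n. l' j * om j)"
  obtains a where "\<forall>j<n. a \<bullet> vs j \<le> om j" "a \<bullet> p = (\<Sum>j<n. l j * om j)"
proof -
  define m where "m = (\<Sum>j<n. l j * om j)"
  have pm: "(p, m) \<in> lifted_cone"
    using lifted_cone_memI[OF l(1)] by (simp add: l(2) m_def)
  have "(p, s) \<notin> lifted_cone" if "s < m" for s
  proof
    assume "(p, s) \<in> lifted_cone"
    then obtain c where "\<forall>j<n. 0 \<le> c j" "p = (\<Sum>j<n. c j *\<^sub>R vs j)" "s = (\<Sum>j<n. c j * om j)"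
      by (auto simp: lifted_cone_eq)
    then have "m \<le> s"
      using min by (simp add: m_def)
    with that show False
      by simp
  qed
  then have disj: "({p} \<times> {..<m}) \<inter> lifted_cone = {}"
    by auto
  have "convex ({p} \<times> {..<m})" "convex lifted_cone"
    by (simp_all add: convex_Times lifted_cone_def convex_convex_cone_hull)
  moreover have "{p} \<times> {..<m} \<noteq> {}" "lifted_cone \<noteq> {}"
    using pm by (auto intro!: exI[of _ "m - 1"])
  ultimately obtain \<xi> b where "\<xi> \<noteq> 0" and below: "\<forall>z\<in>{p} \<times> {..<m}. \<xi> \<bullet> z \<le> b"
    and above: "\<forall>z\<in>lifted_cone. b \<le> \<xi> \<bullet> z"
    using separating_hyperplane_sets disj by metis
  obtain \<alpha> \<sigma> where \<xi>: "\<xi> = (\<alpha>, \<sigma>)"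
    by (cases \<xi>)
  have "conic lifted_cone"
    by (simp add: lifted_cone_def conic_convex_cone_hull)
  then have "0 \<le> \<xi> \<bullet> (x, s)" if "(x, s) \<in> lifted_cone" for x s
    using above that by (intro conic_inner_nonneg[of lifted_cone b]) auto
  then have nonneg: "0 \<le> \<alpha> \<bullet> x + \<sigma> * s" if "(x, s) \<in> lifted_cone" for x s
    using that by (simp add: \<xi>)
  have "b \<le> 0"
    using above convex_cone_hull_contains_0 by (force simp: lifted_cone_def)
  then have below_m: "\<alpha> \<bullet> p + \<sigma> * s \<le> 0" if "s < m" for s
    using below that by (force simp: \<xi>)
  note bounds = affine_nonpos_below[where u = "\<alpha> \<bullet> p" and \<sigma> = \<sigma> and m = m, OF below_m]
  moreover note nonneg[OF pm]
  ultimately have tight: "\<alpha> \<bullet> p + \<sigma> * m = 0"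
    by simp
  have gens: "0 \<le> \<alpha> \<bullet> vs j + \<sigma> * om j" if "j < n" for j
    using that by (intro nonneg) (simp add: lifted_cone_def hull_inc)
  have "\<sigma> \<noteq> 0"
  proof
    assume "\<sigma> = 0"
    \<comment> \<open>A vertical separating hyperplane would support K at its interior point p.\<close>
    then have "\<alpha> \<noteq> 0"
      using \<open>\<xi> \<noteq> 0\<close> by (simp add: \<xi> zero_prod_def)
    have "0 \<le> \<alpha> \<bullet> q" if "q \<in> K" for q
      by (rule inner_nonneg_cone_of[OF _ that]) (use gens \<open>\<sigma> = 0\<close> in simp)
    then have "0 < \<alpha> \<bullet> p"
      using \<open>\<alpha> \<noteq> 0\<close> p by (rule inner_pos_interior)
    with tight \<open>\<sigma> = 0\<close> show False
      by simp
  qed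
  with bounds(1) have "0 < \<sigma>"
    by simp
  define a where "a = - (1 / \<sigma>) *\<^sub>R \<alpha>"
  have "\<forall>j<n. a \<bullet> vs j \<le> om j"
  proof (intro allI impI)
    fix j assume "j < n"
    with gens[OF \<open>j < n\<close>] \<open>0 < \<sigma>\<close> show "a \<bullet> vs j \<le> om j"
      by (simp add: a_def field_simps)
  qed
  moreover have "a \<bullet> p = m"
    using tight \<open>0 < \<sigma>\<close> by (auto simp: a_def field_simps)
  ultimately show ?thesis
    using that by (simp add: m_def)
qed

lemma interior_K_in_cell:
  assumes "p \<in> interior K"
  obtains S where "S \<in> Cells" "p \<in> cone_of vs S"
proof -
  obtain l where l: "\<forall>j<n. 0 \<le> l j" "p = (\<Sum>j<n. l j *\<^sub>R vs j)"
    and min: "\<And>l'. \<forall>j<n. 0 \<le> l' j \<Longrightarrow> p = (\<Sum>j<n. l' j *\<^sub>R vs j)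
       \<Longrightarrow> (\<Sum>j<n. l j * om j) \<le> (\<Sum>j<n. l' j * om j)"
    using min_height_representation assms interior_subset by blast
  obtain a where a: "\<forall>j<n. a \<bullet> vs j \<le> om j" "a \<bullet> p = (\<Sum>j<n. l j * om j)"
    using lower_supporting_functional[OF assms l min] by blast
  define S where "S = {j \<in> {..<n}. a \<bullet> vs j = om j}"
  have "j \<in> S" if "j < n" "l j \<noteq> 0" for j
    using inner_sum_eq_heights_on_support[of "{..<n}" a vs om l j] a l that by (simp add: S_def)
  then have "p = (\<Sum>j\<in>S. l j *\<^sub>R vs j)"
    unfolding l(2) by (intro sum.mono_neutral_cong_right) (auto simp: S_def)
  then have "p \<in> cone_of vs S"
    using l(1) by (auto simp: cone_of_def S_def)
  moreover have "S \<in> Cells"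
    unfolding S_def using a(1) by (rule cellI)
  ultimately show ?thesis
    using that by blast
qed

lemma interior_K_positive_cell:
  assumes "w \<in> interior K"
  obtains \<tau> c where "\<tau> \<in> Cells" "\<forall>j\<in>\<tau>. 0 < c j" "w = (\<Sum>j\<in>\<tau>. c j *\<^sub>R vs j)"
proof -
  obtain S where S: "S \<in> Cells" "w \<in> cone_of vs S"
    using assms by (rule interior_K_in_cell)
  then obtain c where c: "w = (\<Sum>j\<in>S. c j *\<^sub>R vs j)" "\<forall>j\<in>S. 0 \<le> c j"
    unfolding cone_of_def by blast
  define \<tau> where "\<tau> = {j \<in> S. 0 < c j}"
  have "\<tau> \<in> Cells"
    unfolding \<tau>_def using S(1) by (rule cell_subset_cell) auto
  moreover have "w = (\<Sum>j\<in>\<tau>. c j *\<^sub>R vs j)"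
    unfolding c(1) \<tau>_def using finite_cell[OF S(1)] c(2)
    by (intro sum.mono_neutral_cong_right) auto
  ultimately show ?thesis
    using that by (auto simp: \<tau>_def)
qed

lemma cell_generators_sum_interior:
  assumes \<tau>: "\<tau> \<in> Cells" and c: "\<forall>j\<in>\<tau>. 0 < c j" and w: "(\<Sum>j\<in>\<tau>. c j *\<^sub>R vs j) \<in> interior K"
  shows "(\<Sum>j\<in>\<tau>. vs j) \<in> interior K"
proof -
  have fin: "finite \<tau>"
    using \<tau> by (rule finite_cell)
  define m where "m = Max (insert 1 (c ` \<tau>))"
  have "1 \<le> m" "\<forall>j\<in>\<tau>. c j \<le> m"
    using fin by (auto simp: m_def)
  have "m *\<^sub>R (\<Sum>j\<in>\<tau>. vs j) - (\<Sum>j\<in>\<tau>. c j *\<^sub>R vs j) = (\<Sum>j\<in>\<tau>. (m - c j) *\<^sub>R vs j)"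
    by (simp add: scaleR_sum_right scaleR_diff_left sum_subtractf)
  also have "\<dots> \<in> cone_of vs \<tau>"
    using \<open>\<forall>j\<in>\<tau>. c j \<le> m\<close> unfolding cone_of_def by (intro CollectI exI[of _ "\<lambda>j. m - c j"]) simp
  finally have "m *\<^sub>R (\<Sum>j\<in>\<tau>. vs j) - (\<Sum>j\<in>\<tau>. c j *\<^sub>R vs j) \<in> K"
    using cell_cone_subset_K[OF \<tau>] by blast
  then have mU: "m *\<^sub>R (\<Sum>j\<in>\<tau>. vs j) \<in> interior K"
    using convex_cone_add_interior[OF convex_cone_K _ w] by fastforce
  have "(1 / m) *\<^sub>R (m *\<^sub>R (\<Sum>j\<in>\<tau>. vs j)) \<in> interior K"
    by (rule conic_scaleR_interior[OF conic_K _ mU]) (use \<open>1 \<le> m\<close> in simp)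
  then show ?thesis
    using \<open>1 \<le> m\<close> by simp
qed

end

section \<open>The module M(beta)\<close>

locale lattice_fan = regular_fan +
  assumes vs_lattice: "\<forall>j<n. vs j \<in> lattice"
    and generates: "\<forall>x \<in> lattice. \<exists>a :: nat \<Rightarrow> int. x = (\<Sum>j<n. of_int (a j) *\<^sub>R vs j)"
begin

lemma int_comb_lattice: "A \<subseteq> {..<n} \<Longrightarrow> (\<Sum>j\<in>A. of_int (k j) *\<^sub>R vs j) \<in> lattice"
  using vs_lattice by (intro lattice_sum lattice_of_int_scaleR) auto

text \<open>Pigeonhole on the fractional parts of the multiples of z: the coordinates of a lattice point
  in a cell are rational.\<close>

lemma cell_lattice_point_nat_multiple:
  assumes S: "S \<in> Cells" and z: "z \<in> lattice" "z \<in> cone_of vs S"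
  obtains D :: nat and e :: "nat \<Rightarrow> nat"
  where "0 < D" "of_nat D *\<^sub>R z = (\<Sum>j\<in>S. of_nat (e j) *\<^sub>R vs j)"
proof -
  obtain c where c: "z = (\<Sum>j\<in>S. c j *\<^sub>R vs j)" "\<forall>j\<in>S. 0 \<le> c j"
    using z(2) unfolding cone_of_def by blast
  define P where "P m = (\<Sum>j\<in>S. frac (of_nat m * c j) *\<^sub>R vs j)" for m :: nat
  have "P m \<in> {x \<in> lattice. norm x \<le> (\<Sum>j\<in>S. norm (vs j))}" for m
  proof -
    have "of_int (int m) *\<^sub>R z = P m + (\<Sum>j\<in>S. of_int \<lfloor>of_nat m * c j\<rfloor> *\<^sub>R vs j)"
      by (simp add: P_def c(1) scaleR_sum_right frac_def algebra_simps flip: sum.distrib)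
    then have "P m \<in> lattice"
      using lattice_diff[OF lattice_of_int_scaleR[OF z(1)] int_comb_lattice[OF cells_subset[OF S]]]
      by (metis add_diff_cancel_right')
    moreover have "norm (P m) \<le> (\<Sum>j\<in>S. norm (vs j))"
      unfolding P_def
      by (intro order_trans[OF norm_sum] sum_mono)
        (simp add: mult_left_le_one_le[OF norm_ge_zero frac_ge_0 less_imp_le[OF frac_lt_1]])
    ultimately show ?thesis by simp
  qed
  then have "finite (range P)"
    by (blast intro: finite_subset[OF _ finite_lattice_norm_le])
  then obtain a b where "a < b" "P a = P b"
    by (metis finite_imageD infinite_UNIV_nat inj_onI linorder_neqE_nat)
  have frac_eq: "frac (of_nat a * c j) = frac (of_nat b * c j)" if "j \<in> S" for j
    using cell_coeffs_unique[OF S _ that] \<open>P a = P b\<close> by (simp add: P_def)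
  define e where "e j = nat (\<lfloor>of_nat b * c j\<rfloor> - \<lfloor>of_nat a * c j\<rfloor>)" for j
  have "of_nat (e j) = of_nat (b - a) * c j" if "j \<in> S" for j
  proof -
    have "of_nat (b - a) * c j = of_int (\<lfloor>of_nat b * c j\<rfloor> - \<lfloor>of_nat a * c j\<rfloor>)"
      using frac_eq[OF that] \<open>a < b\<close> by (simp add: frac_def of_nat_diff algebra_simps)
    moreover have "0 \<le> of_nat (b - a) * c j"
      using c(2) that by simp
    ultimately show ?thesis
      by (simp add: e_def)
  qed
  then have "of_nat (b - a) *\<^sub>R z = (\<Sum>j\<in>S. of_nat (e j) *\<^sub>R vs j)"
    by (simp add: c(1) scaleR_sum_right)
  moreover have "0 < b - a"
    using \<open>a < b\<close> by simp
  ultimately show ?thesis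
    using that by blast
qed

lemma neg_generator_nonneg_off_cell:
  assumes \<tau>: "\<tau> \<in> Cells" and U: "(\<Sum>j\<in>\<tau>. vs j) \<in> interior K" and k: "k < n"
  obtains r :: "nat \<Rightarrow> int"
  where "(\<Sum>j<n. of_int (r j) *\<^sub>R vs j) = - vs k" "\<forall>j<n. j \<notin> \<tau> \<longrightarrow> 0 \<le> r j"
proof -
  define U where "U = (\<Sum>j\<in>\<tau>. vs j)"
  obtain \<epsilon> where "0 < \<epsilon>" and ball: "ball U \<epsilon> \<subseteq> interior K"
    using openE[OF open_interior U[folded U_def]] by blast
  obtain M :: nat where M: "norm (vs k) / \<epsilon> < M"
    using reals_Archimedean2 by blast
  moreover have "0 \<le> norm (vs k) / \<epsilon>"
    using \<open>0 < \<epsilon>\<close> by simp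
  ultimately have "0 < M"
    by linarith
  \<comment> \<open>The lattice point M U - v_k lies in the interior of K, hence in a cone of the fan.\<close>
  define z where "z = of_nat M *\<^sub>R U - vs k"
  have "dist U (U - (1 / of_nat M) *\<^sub>R vs k) < \<epsilon>"
    using M \<open>0 < M\<close> \<open>0 < \<epsilon>\<close> by (simp add: dist_norm field_simps)
  then have "U - (1 / of_nat M) *\<^sub>R vs k \<in> interior K"
    using ball by auto
  then have "of_nat M *\<^sub>R (U - (1 / of_nat M) *\<^sub>R vs k) \<in> interior K"
    using \<open>0 < M\<close> conic_K by (intro conic_scaleR_interior) auto
  then have "z \<in> interior K"
    using \<open>0 < M\<close> by (simp add: z_def scaleR_diff_right)
  then obtain S where S: "S \<in> Cells" "z \<in> cone_of vs S"
    by (rule interior_K_in_cell)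
  have "of_nat M *\<^sub>R U = (\<Sum>j\<in>\<tau>. of_int (int M) *\<^sub>R vs j)"
    by (simp add: U_def scaleR_sum_right)
  then have "of_nat M *\<^sub>R U \<in> lattice"
    using int_comb_lattice[OF cells_subset[OF \<tau>], of "\<lambda>_. int M"] by simp
  then have "z \<in> lattice"
    unfolding z_def using vs_lattice k by (simp add: lattice_diff)
  then obtain D e where D: "0 < D" "of_nat D *\<^sub>R z = (\<Sum>j\<in>S. of_nat (e j) *\<^sub>R vs j)"
    by (rule cell_lattice_point_nat_multiple[OF S(1) _ S(2)])
  \<comment> \<open>Hence - v_k = D z - D M U + (D - 1) v_k, with nonnegative coefficients off \<tau>.\<close>
  define r where "r j = (if j \<in> S then int (e j) else 0) - (if j \<in> \<tau> then int (D * M) else 0)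
      + (if j \<in> {k} then int D - 1 else 0)" for j
  have "of_int (r j) = (if j \<in> S then real (e j) else 0) - (if j \<in> \<tau> then real (D * M) else 0)
      + (if j \<in> {k} then real D - 1 else 0)" for j
    by (simp add: r_def)
  then have "(\<Sum>j<n. of_int (r j) *\<^sub>R vs j)
      = (\<Sum>j<n. (if j \<in> S then real (e j) else 0) *\<^sub>R vs j)
        - (\<Sum>j<n. (if j \<in> \<tau> then real (D * M) else 0) *\<^sub>R vs j)
        + (\<Sum>j<n. (if j \<in> {k} then real D - 1 else 0) *\<^sub>R vs j)"
    by (simp only: scaleR_add_left scaleR_diff_left sum.distrib sum_subtractf)
  also have "\<dots> = (\<Sum>j\<in>S. of_nat (e j) *\<^sub>R vs j) - of_nat (D * M) *\<^sub>R U + (of_nat D - 1) *\<^sub>R vs k"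
    using sum_lessThan_restrict[OF cells_subset[OF S(1)], of "\<lambda>j. real (e j)" vs]
      sum_lessThan_restrict[OF cells_subset[OF \<tau>], of "\<lambda>_. real (D * M)" vs]
      sum_lessThan_restrict[of "{k}" n "\<lambda>_. real D - 1" vs] k
    by (simp add: U_def scaleR_sum_right)
  also have "\<dots> = - vs k"
    by (simp add: D(2)[symmetric] z_def algebra_simps)
  finally show ?thesis
    by (rule that) (use D(1) in \<open>simp add: r_def\<close>)
qed

lemma lattice_point_nonneg_off_cell:
  assumes \<tau>: "\<tau> \<in> Cells" "(\<Sum>j\<in>\<tau>. vs j) \<in> interior K" and y: "y \<in> lattice"
  obtains r :: "nat \<Rightarrow> int"
  where "(\<Sum>j<n. of_int (r j) *\<^sub>R vs j) = y" "\<forall>j<n. j \<notin> \<tau> \<longrightarrow> 0 \<le> r j"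
proof -
  define G where "G = {x. \<exists>r :: nat \<Rightarrow> int. (\<Sum>j<n. of_int (r j) *\<^sub>R vs j) = x
      \<and> (\<forall>j<n. j \<notin> \<tau> \<longrightarrow> 0 \<le> r j)}"
  have G_add: "x + x' \<in> G" if x: "x \<in> G" "x' \<in> G" for x x'
  proof -
    obtain r r' where "(\<Sum>j<n. of_int (r j) *\<^sub>R vs j) = x" "(\<Sum>j<n. of_int (r' j) *\<^sub>R vs j) = x'"
      "\<forall>j<n. j \<notin> \<tau> \<longrightarrow> 0 \<le> r j" "\<forall>j<n. j \<notin> \<tau> \<longrightarrow> 0 \<le> r' j"
      using x by (auto simp: G_def)
    then show ?thesis
      unfolding G_def
      by (intro CollectI exI[of _ "\<lambda>j. r j + r' j"]) (auto simp: scaleR_add_left sum.distrib)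
  qed
  have G_sum: "sum f A \<in> G" if "\<And>a. a \<in> A \<Longrightarrow> f a \<in> G" for f and A :: "nat set"
    using that
  proof (induction A rule: infinite_finite_induct)
    case (insert a A)
    then show ?case
      by (simp add: G_add)
  qed (auto simp: G_def intro!: exI[of _ "\<lambda>_. 0"])
  have G_gen: "vs k \<in> G" "- vs k \<in> G" if k: "k < n" for k
  proof -
    show "vs k \<in> G"
      unfolding G_def using sum_lessThan_restrict[of "{k}" n "\<lambda>_. 1" vs] k
      by (intro CollectI exI[of _ "\<lambda>j. if j \<in> {k} then 1 else 0"]) (auto simp: if_distrib cong: if_cong)
    obtain r where "(\<Sum>j<n. of_int (r j) *\<^sub>R vs j) = - vs k" "\<forall>j<n. j \<notin> \<tau> \<longrightarrow> 0 \<le> r j"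
      using neg_generator_nonneg_off_cell[OF \<tau> k] by blast
    then show "- vs k \<in> G"
      by (auto simp: G_def)
  qed
  have G_mult: "of_int m *\<^sub>R vs k \<in> G" if k: "k < n" for k and m :: int
  proof -
    have "of_int m *\<^sub>R vs k = (\<Sum>i<nat \<bar>m\<bar>. (if 0 \<le> m then vs k else - vs k))"
      by (simp only: sum_constant_scaleR card_lessThan) (simp add: abs_if)
    also have "\<dots> \<in> G"
      by (rule G_sum) (use G_gen[OF k] in simp)
    finally show ?thesis .
  qed
  obtain a :: "nat \<Rightarrow> int" where "y = (\<Sum>j<n. of_int (a j) *\<^sub>R vs j)"
    using generates y by blast
  also have "\<dots> \<in> G"
    by (rule G_sum) (simp add: G_mult)
  finally have "y \<in> G" .
  then show ?thesis
    using that by (auto simp: G_def)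
qed

lemma Box_lattice: "x \<in> Box vs n om \<Longrightarrow> x \<in> lattice"
  by (simp add: Box_def)

lemma Box_in_cell:
  assumes "x \<in> Box vs n om"
  obtains S where "S \<in> Cells" "x \<in> cone_of vs S"
proof -
  obtain \<sigma> q where \<sigma>: "maximal_cone vs n om \<sigma>" and x: "x = (\<Sum>j<n. q j *\<^sub>R vs j)"
    and q: "\<forall>j<n. 0 \<le> q j \<and> q j < 1" "\<forall>j<n. q j \<noteq> 0 \<longrightarrow> ray vs j face_of \<sigma>"
    using assms by (auto simp: Box_def)
  obtain S where S: "S \<in> Cells" "\<sigma> = cone_of vs S"
    using \<sigma> by (auto simp: maximal_cone_def elim: fanE)
  have "q j *\<^sub>R vs j \<in> cone_of vs S" if "j < n" for j
  proof (cases "q j = 0")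
    case True
    then show ?thesis
      by (simp add: zero_in_cone_of)
  next
    case False
    then have "ray vs j \<subseteq> cone_of vs S"
      using q(2) that S(2) face_of_imp_subset by blast
    moreover have "q j *\<^sub>R vs j \<in> ray vs j"
      using q(1) that by (auto simp: ray_def)
    ultimately show ?thesis
      by blast
  qed
  then have "x \<in> cone_of vs S"
    unfolding x by (intro convex_cone_sum convex_cone_cone_of finite_cell[OF S(1)]) auto
  with S(1) show ?thesis
    by (rule that)
qed

lemma Box_memI:
  assumes \<tau>: "\<tau> \<in> Cells" and x: "x \<in> lattice" "x = (\<Sum>j\<in>\<tau>. q j *\<^sub>R vs j)"
    and q: "\<forall>j\<in>\<tau>. 0 \<le> q j \<and> q j < 1"
  shows "x \<in> Box vs n om"
proof -
  obtain S where S: "S \<in> Cells" "\<tau> \<subseteq> S" "maximal_cone vs n om (cone_of vs S)"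
    using \<tau> by (rule cell_subset_maximal_cell)
  define q' where "q' j = (if j \<in> \<tau> then q j else 0)" for j
  have "x = (\<Sum>j<n. q' j *\<^sub>R vs j)"
    unfolding x(2) q'_def by (rule sum_lessThan_restrict[OF cells_subset[OF \<tau>], symmetric])
  moreover have "\<forall>j<n. 0 \<le> q' j \<and> q' j < 1"
    using q by (simp add: q'_def)
  moreover have "ray vs j face_of cone_of vs S" if "q' j \<noteq> 0" for j
    using that S(1,2) by (intro ray_face_of_cell) (auto simp: q'_def split: if_splits)
  ultimately show ?thesis
    unfolding Box_def using x(1) S(3) by blast
qed

definition gen_rays :: "_ \<Rightarrow> (nat \<Rightarrow> int) \<Rightarrow> nat set" where
  "gen_rays x r = {j. j < n \<and> r j < 0 \<and> ray vs j \<in> Fan \<and> \<not> ray vs j face_of sigma_of vs n om x}"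

definition Mgen :: "_ \<Rightarrow> (nat \<Rightarrow> int) \<Rightarrow> _ \<Rightarrow> complex" where
  "Mgen x r = kmult vs n om (mono x)
     (kprod_list vs n om (map (\<lambda>j. mono (vs j)) (sorted_list_of_set (gen_rays x r))))"

lemma Mgens_eq:
  "Mgens vs n om \<beta> = {Mgen x r | x r. x \<in> Box vs n om \<and> x + (\<Sum>j<n. of_int (r j) *\<^sub>R vs j) = \<beta>
      \<and> (\<forall>j<n. ray vs j \<notin> Fan \<longrightarrow> 0 \<le> r j)}"
  by (simp add: Mgens_def Mgen_def gen_rays_def)

lemma MgensE:
  assumes "g \<in> Mgens vs n om \<beta>"
  obtains x r where "g = Mgen x r" "x \<in> Box vs n om" "x + (\<Sum>j<n. of_int (r j) *\<^sub>R vs j) = \<beta>"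
    "\<forall>j<n. ray vs j \<notin> Fan \<longrightarrow> 0 \<le> r j"
  using assms unfolding Mgens_eq by blast

lemma finite_gen_rays: "finite (gen_rays x r)"
  by (simp add: gen_rays_def)

lemma gen_rays_coord_ge_one:
  assumes \<tau>: "\<tau> \<in> Cells" and c: "\<forall>j\<in>\<tau>. 0 < c j" and x: "x = (\<Sum>j\<in>\<tau>. frac (c j) *\<^sub>R vs j)"
    and j: "j \<in> gen_rays x r" "j \<in> \<tau>"
  shows "1 \<le> c j"
proof -
  have "frac (c j) = 0"
  proof (rule ccontr)
    assume "frac (c j) \<noteq> 0"
    then have "j \<in> {i \<in> \<tau>. 0 < frac (c i)}"
      using j(2) frac_ge_0[of "c j"] by auto
    moreover have "{i \<in> \<tau>. 0 < frac (c i)} \<in> Cells"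
      by (rule cell_subset_cell[OF \<tau>]) auto
    ultimately have "ray vs j face_of cone_of vs {i \<in> \<tau>. 0 < frac (c i)}"
      by (intro ray_face_of_cell)
    also have "cone_of vs {i \<in> \<tau>. 0 < frac (c i)} = sigma_of vs n om x"
      unfolding x using sigma_of_eq[OF \<tau>, of "\<lambda>i. frac (c i)"] by simp
    finally show False
      using j(1) by (simp add: gen_rays_def)
  qed
  then have "c j = of_int \<lfloor>c j\<rfloor>"
    by (simp add: frac_def)
  moreover have "0 < c j"
    using c j(2) by blast
  ultimately have "0 < \<lfloor>c j\<rfloor>"
    by (metis of_int_0_less_iff)
  then show ?thesis
    by simp
qed

lemma kprod_gen_rays_support:
  "{w. kprod_list vs n om (map (\<lambda>j. mono (vs j)) (sorted_list_of_set (gen_rays x r))) w \<noteq> 0}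
     \<subseteq> {\<Sum>j\<in>gen_rays x r. vs j}"
  using kprod_list_monomials_support[of vs n om "sorted_list_of_set (gen_rays x r)"]
  by (simp add: finite_gen_rays sum_list_distinct_conv_sum_set)

lemma Mgen_support: "{w. Mgen x r w \<noteq> 0} \<subseteq> {x + (\<Sum>j\<in>gen_rays x r. vs j)}"
proof
  fix w assume "w \<in> {w. Mgen x r w \<noteq> 0}"
  then obtain a b where "mono x a \<noteq> 0" and
    b: "kprod_list vs n om (map (\<lambda>j. mono (vs j)) (sorted_list_of_set (gen_rays x r))) b \<noteq> 0"
    and "w = a + b"
    unfolding Mgen_def by (auto elim: kmult_nonzeroE)
  moreover have "a = x"
    using \<open>mono x a \<noteq> 0\<close> by (simp add: mono_def split: if_splits)
  moreover have "b = (\<Sum>j\<in>gen_rays x r. vs j)"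
    using kprod_gen_rays_support b by blast
  ultimately show "w \<in> {x + (\<Sum>j\<in>gen_rays x r. vs j)}"
    by simp
qed

lemma Mgen_in_cell:
  assumes "S \<in> Cells" "x \<in> cone_of vs S" "gen_rays x r \<subseteq> S"
  shows "Mgen x r = mono (x + (\<Sum>j\<in>gen_rays x r. vs j))"
proof -
  have "kprod_list vs n om (map (\<lambda>j. mono (vs j)) (sorted_list_of_set (gen_rays x r)))
      = mono (\<Sum>j\<in>gen_rays x r. vs j)"
    using kprod_list_monomials_in_cell[OF assms(1), of "sorted_list_of_set (gen_rays x r)"] assms(3)
    by (simp add: finite_gen_rays sum_list_distinct_conv_sum_set)
  moreover have "(\<Sum>j\<in>gen_rays x r. vs j) \<in> cone_of vs S"
    using assms(1,3) finite_cell[OF assms(1)]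
    by (intro convex_cone_sum convex_cone_cone_of cone_of_generator) auto
  ultimately show ?thesis
    using assms(1,2) by (simp add: Mgen_def kmult_monomials compat_cone_of)
qed

lemma kmult_finsupp_K:
  assumes "finsupp_in lattice f" "finsupp_in lattice g"
  shows "finsupp_in (K \<inter> lattice) (kmult vs n om f g)"
proof (rule kmult_finsupp_in[OF assms])
  fix a b assume ab: "a \<in> lattice" "b \<in> lattice" "compat vs n om a b"
  then obtain S where "S \<in> Cells" "a \<in> cone_of vs S" "b \<in> cone_of vs S"
    by (auto simp: compat_def elim: fanE)
  then have "a + b \<in> K"
    using cell_cone_subset_K convex_cone_add[OF convex_cone_cone_of[OF finite_cell]] by blast
  with ab show "a + b \<in> K \<inter> lattice"
    by (simp add: lattice_add)
qed

lemma Rsub_add_monomials: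
  assumes "T \<in> Cells" "z1 \<in> cone_of vs T" "z2 \<in> cone_of vs T"
    and "mono z1 \<in> Rsub vs n om" "mono z2 \<in> Rsub vs n om"
  shows "mono (z1 + z2) \<in> Rsub vs n om"
proof -
  have "kmult vs n om (mono z1) (mono z2) = mono (z1 + z2)"
    using compat_cone_of[OF assms(1-3)] by (simp add: kmult_monomials)
  with Rsub.mult[OF assms(4,5)] show ?thesis
    by simp
qed

lemma Rsub_cell_generator:
  assumes "T \<in> Cells" "j \<in> T"
  shows "mono (vs j) \<in> Rsub vs n om"
proof (rule Rsub.gen)
  show "j < n"
    using cells_subset[OF assms(1)] assms(2) by blast
  show "ray vs j \<in> Fan"
    using assms by (rule ray_in_Fan)
qed

lemma Rsub_nat_comb:
  assumes T: "T \<in> Cells"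
  shows "mono (\<Sum>j\<in>T. of_nat (k j) *\<^sub>R vs j) \<in> Rsub vs n om"
proof -
  have fin: "finite T"
    using T by (rule finite_cell)
  define R where "R = {z \<in> cone_of vs T. mono z \<in> Rsub vs n om}"
  have R_add: "z1 + z2 \<in> R" if "z1 \<in> R" "z2 \<in> R" for z1 z2
    using that Rsub_add_monomials[OF T] convex_cone_add[OF convex_cone_cone_of[OF fin]]
    by (auto simp: R_def)
  have "mono 0 \<in> Rsub vs n om"
    using Rsub.const[where c = 1 and vs = vs and n = n and om = om] by simp
  then have R_0: "0 \<in> R"
    using convex_cone_contains_0[OF convex_cone_cone_of[OF fin]] by (simp add: R_def)
  have R_sum: "sum f A \<in> R" if "\<And>a. a \<in> A \<Longrightarrow> f a \<in> R" for f and A :: "nat set"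
    using that by (induction A rule: infinite_finite_induct) (simp_all add: R_0 R_add)
  have "of_nat m *\<^sub>R vs j \<in> R" if "j \<in> T" for j m
  proof -
    have "vs j \<in> R"
      using that fin by (simp add: R_def cone_of_generator Rsub_cell_generator[OF T])
    then have "(\<Sum>i<m. vs j) \<in> R"
      by (intro R_sum)
    then show ?thesis
      by (simp only: sum_constant_scaleR card_lessThan)
  qed
  then show ?thesis
    using R_sum[of T] by (simp add: R_def)
qed

lemma Rsub_scaled_nat_comb:
  assumes "T \<in> Cells"
  shows "(\<lambda>u. a * mono (\<Sum>j\<in>T. of_nat (k j) *\<^sub>R vs j) u) \<in> Rsub vs n om"
proof -
  let ?\<rho> = "\<Sum>j\<in>T. of_nat (k j) *\<^sub>R vs j"
  have "?\<rho> \<in> cone_of vs T"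
    unfolding cone_of_def by (rule CollectI, rule exI[of _ "\<lambda>j. of_nat (k j)"]) simp
  then have "kmult vs n om (\<lambda>u. a * mono 0 u) (mono ?\<rho>) = (\<lambda>u. a * mono ?\<rho> u)"
    using compat_cone_of[OF assms zero_in_cone_of] by (simp add: kmult_scaled_monomials)
  with Rsub.mult[OF Rsub.const[where c = a] Rsub_nat_comb[OF assms, where k = k]] show ?thesis
    by simp
qed

lemma Rsub_finsupp: "f \<in> Rsub vs n om \<Longrightarrow> finsupp_in (K \<inter> lattice) f"
proof (induction rule: Rsub.induct)
  case (const c)
  have "{w. c * mono 0 w \<noteq> 0} \<subseteq> {0}"
    by (auto simp: mono_def split: if_splits)
  moreover have "0 \<in> K"
    by (rule zero_in_cone_of)
  ultimately show ?case
    by (auto simp: finsupp_in_def intro: finite_subset)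
next
  case (gen j)
  then show ?case
    using vs_lattice cone_of_generator[of "{..<n}" j vs]
    by (intro finsupp_in_subsetmial) auto
next
  case (add f g)
  then show ?case
    by (intro finsupp_in_add)
next
  case (mult f g)
  then show ?case
    using kmult_finsupp_K finsupp_in_subset by blast
qed

lemma Mgen_finsupp: "x \<in> lattice \<Longrightarrow> finsupp_in (K \<inter> lattice) (Mgen x r)"
  unfolding Mgen_def
proof (rule kmult_finsupp_K)
  have "(\<Sum>j\<in>gen_rays x r. vs j) \<in> lattice"
    using vs_lattice by (intro lattice_sum) (auto simp: gen_rays_def)
  then show "finsupp_in lattice
      (kprod_list vs n om (map (\<lambda>j. mono (vs j)) (sorted_list_of_set (gen_rays x r))))"
    using kprod_gen_rays_support[of x r] by (auto simp: finsupp_in_def intro: finite_subset)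
qed (rule finsupp_in_subsetmial)

lemma Mmod_subset_CK: "Mmod vs n om \<beta> \<subseteq> CK vs n"
proof
  fix f assume "f \<in> Mmod vs n om \<beta>"
  then have "finsupp_in (K \<inter> lattice) f"
    unfolding Mmod_def
  proof (induction rule: Rspan.induct)
    case zero
    then show ?case
      by (rule finsupp_in_zero)
  next
    case (smul \<rho> g)
    obtain x r where g: "g = Mgen x r" and x: "x \<in> Box vs n om"
      and "x + (\<Sum>j<n. of_int (r j) *\<^sub>R vs j) = \<beta>" "\<forall>j<n. ray vs j \<notin> Fan \<longrightarrow> 0 \<le> r j"
      using smul(2) by (rule MgensE)
    have "finsupp_in lattice \<rho>"
      by (rule finsupp_in_subset[OF Rsub_finsupp[OF smul(1)]]) blast
    moreover have "finsupp_in lattice g"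
      unfolding g by (rule finsupp_in_subset[OF Mgen_finsupp[OF Box_lattice[OF x]]]) blast
    ultimately show ?case
      by (rule kmult_finsupp_K)
  next
    case (add f g)
    then show ?case
      by (intro finsupp_in_add)
  qed
  then show "f \<in> CK vs n"
    by (simp add: CK_def finsupp_in_def Kcone_eq)
qed

lemma sigma_of_inner_zero:
  assumes "S \<in> Cells" "x \<in> cone_of vs S" "\<And>q. q \<in> K \<Longrightarrow> 0 \<le> \<xi> \<bullet> q" "\<xi> \<bullet> x = 0"
    and "q \<in> sigma_of vs n om x"
  shows "\<xi> \<bullet> q = 0"
proof -
  obtain c where c: "x = (\<Sum>i\<in>S. c i *\<^sub>R vs i)" "\<forall>i\<in>S. 0 \<le> c i"
    using assms(2) unfolding cone_of_def by blast
  define T where "T = {i \<in> S. 0 < c i}"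
  have nonneg: "0 \<le> \<xi> \<bullet> vs j" if "j \<in> S" for j
    using assms(3) cone_of_generator[of "{..<n}" j vs] cells_subset[OF assms(1)] that by auto
  have "\<xi> \<bullet> vs i = 0" if "i \<in> T" for i
  proof -
    have "(- \<xi>) \<bullet> vs i = 0"
      by (rule inner_sum_eq_heights_on_support[OF finite_cell[OF assms(1)], where om = "\<lambda>_. 0"])
        (use nonneg c assms(4) that in \<open>auto simp: T_def\<close>)
    then show ?thesis
      by simp
  qed
  moreover have "sigma_of vs n om x = cone_of vs T"
    unfolding c(1) T_def using assms(1) c(2) by (rule sigma_of_eq)
  ultimately show ?thesis
    using inner_zero_cone_of[of T \<xi> vs q] assms(5) by blast
qed

lemma Mgen_functional_nonneg:
  assumes x: "x \<in> Box vs n om" and xr: "x + (\<Sum>j<n. of_int (r j) *\<^sub>R vs j) = \<beta>"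
    and r: "\<forall>j<n. ray vs j \<notin> Fan \<longrightarrow> 0 \<le> r j"
    and \<xi>: "\<And>q. q \<in> K \<Longrightarrow> 0 \<le> \<xi> \<bullet> q" "\<xi> \<bullet> (x + (\<Sum>j\<in>gen_rays x r. vs j)) = 0"
  shows "0 \<le> \<xi> \<bullet> \<beta>"
proof -
  obtain S where S: "S \<in> Cells" "x \<in> cone_of vs S"
    using x by (rule Box_in_cell)
  have vK: "vs j \<in> K" if "j < n" for j
    using that by (simp add: cone_of_generator)
  have "0 \<le> \<xi> \<bullet> x"
    using \<xi>(1) cell_cone_subset_K[OF S(1)] S(2) by blast
  moreover have "\<forall>j\<in>gen_rays x r. 0 \<le> \<xi> \<bullet> vs j"
    using \<xi>(1) vK by (simp add: gen_rays_def)
  moreover have "\<xi> \<bullet> x + (\<Sum>j\<in>gen_rays x r. \<xi> \<bullet> vs j) = 0"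
    using \<xi>(2) by (simp add: inner_add_right inner_sum_right)
  ultimately have x0: "\<xi> \<bullet> x = 0" and J0: "\<forall>j\<in>gen_rays x r. \<xi> \<bullet> vs j = 0"
    by (rule nonneg_add_sum_eq_zero[OF finite_gen_rays])+
  \<comment> \<open>Every v_j with r_j < 0 lies in \<sigma>(x) or in gen_rays, where \<xi> vanishes.\<close>
  have "0 \<le> of_int (r j) * (\<xi> \<bullet> vs j)" if "j < n" for j
  proof (cases "0 \<le> r j")
    case True
    then show ?thesis
      using \<xi>(1)[OF vK[OF that]] by simp
  next
    case False
    show ?thesis
    proof (cases "ray vs j face_of sigma_of vs n om x")
      case True
      moreover have "vs j \<in> ray vs j"
        unfolding ray_def by (rule CollectI, rule exI[of _ 1]) simp
      ultimately have "vs j \<in> sigma_of vs n om x"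
        using face_of_imp_subset by blast
      then show ?thesis
        using sigma_of_inner_zero[OF S \<xi>(1) x0] by simp
    next
      case False
      with \<open>\<not> 0 \<le> r j\<close> r that have "j \<in> gen_rays x r"
        by (auto simp: gen_rays_def)
      then show ?thesis
        using J0 by simp
    qed
  qed
  then have "0 \<le> (\<Sum>j<n. of_int (r j) * (\<xi> \<bullet> vs j))"
    by (intro sum_nonneg) simp
  then show ?thesis
    unfolding xr[symmetric] using x0 by (simp add: inner_add_right inner_sum_right)
qed

lemma Mgen_support_interior:
  assumes \<beta>: "- \<beta> \<in> interior K" and x: "x \<in> Box vs n om"
    and xr: "x + (\<Sum>j<n. of_int (r j) *\<^sub>R vs j) = \<beta>" and r: "\<forall>j<n. ray vs j \<notin> Fan \<longrightarrow> 0 \<le> r j"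
  shows "x + (\<Sum>j\<in>gen_rays x r. vs j) \<in> interior K"
proof (rule ccontr)
  define y where "y = x + (\<Sum>j\<in>gen_rays x r. vs j)"
  assume "y \<notin> interior K"
  obtain S where S: "S \<in> Cells" "x \<in> cone_of vs S"
    using x by (rule Box_in_cell)
  have "y \<in> K"
    unfolding y_def using cell_cone_subset_K[OF S(1)] S(2)
    by (intro convex_cone_add[OF convex_cone_K] convex_cone_sum[OF convex_cone_K])
      (auto simp: gen_rays_def cone_of_generator)
  moreover have "interior K \<noteq> {}"
    using \<beta> by blast
  ultimately obtain \<xi> where \<xi>: "\<xi> \<bullet> y = 0" "\<And>q. q \<in> K \<Longrightarrow> 0 \<le> \<xi> \<bullet> q"
    "\<And>q. q \<in> interior K \<Longrightarrow> 0 < \<xi> \<bullet> q"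
    using convex_cone_supporting_functional[OF convex_cone_K _ _ \<open>y \<notin> interior K\<close>] by blast
  have "0 \<le> \<xi> \<bullet> \<beta>"
    using Mgen_functional_nonneg[OF x xr r \<xi>(2)] \<xi>(1) by (simp add: y_def)
  moreover have "0 < \<xi> \<bullet> (- \<beta>)"
    using \<xi>(3) \<beta> by blast
  ultimately show False
    by simp
qed

lemma Mmod_subset_CKint:
  assumes \<beta>: "- \<beta> \<in> interior K"
  shows "Mmod vs n om \<beta> \<subseteq> CKint vs n"
proof
  fix f assume "f \<in> Mmod vs n om \<beta>"
  then have "finsupp_in (interior K \<inter> lattice) f"
    unfolding Mmod_def
  proof (induction rule: Rspan.induct)
    case zero
    then show ?case
      by (rule finsupp_in_zero)
  next
    case (smul \<rho> g)
    obtain x r where g: "g = Mgen x r" and x: "x \<in> Box vs n om"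
      and "x + (\<Sum>j<n. of_int (r j) *\<^sub>R vs j) = \<beta>" "\<forall>j<n. ray vs j \<notin> Fan \<longrightarrow> 0 \<le> r j"
      using smul(2) by (rule MgensE)
    then have "{w. g w \<noteq> 0} \<subseteq> interior K"
      using Mgen_support Mgen_support_interior[OF \<beta>] by blast
    then have "finsupp_in (interior K \<inter> lattice) g"
      using Mgen_finsupp[OF Box_lattice[OF x], of r] by (auto simp: g finsupp_in_def)
    with Rsub_finsupp[OF smul(1)] show ?case
      by (rule kmult_finsupp_in)
        (auto intro: lattice_add convex_cone_add_interior[OF convex_cone_K])
  next
    case (add f g)
    then show ?case
      by (intro finsupp_in_add)
  qed
  then show "f \<in> CKint vs n"
    by (simp add: CKint_def finsupp_in_def Kcone_eq)
qed

lemma interior_point_generator: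
  assumes \<beta>: "\<beta> \<in> lattice" and w: "w \<in> interior K" "w \<in> lattice"
  obtains \<tau> c x r where "\<tau> \<in> Cells" "\<forall>j\<in>\<tau>. 0 < c j" "w = (\<Sum>j\<in>\<tau>. c j *\<^sub>R vs j)"
    "x = (\<Sum>j\<in>\<tau>. frac (c j) *\<^sub>R vs j)" "Mgen x r \<in> Mgens vs n om \<beta>" "gen_rays x r \<subseteq> \<tau>"
proof -
  obtain \<tau> c where \<tau>: "\<tau> \<in> Cells" and c: "\<forall>j\<in>\<tau>. 0 < c j" and wc: "w = (\<Sum>j\<in>\<tau>. c j *\<^sub>R vs j)"
    using w(1) by (rule interior_K_positive_cell)
  define x where "x = (\<Sum>j\<in>\<tau>. frac (c j) *\<^sub>R vs j)"
  have "x = w - (\<Sum>j\<in>\<tau>. of_int \<lfloor>c j\<rfloor> *\<^sub>R vs j)"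
    by (simp add: wc x_def frac_def scaleR_diff_left sum_subtractf)
  then have "x \<in> lattice"
    using lattice_diff[OF w(2) int_comb_lattice[OF cells_subset[OF \<tau>], of "\<lambda>j. \<lfloor>c j\<rfloor>"]] by simp
  then have x_Box: "x \<in> Box vs n om"
    by (rule Box_memI[OF \<tau> _ x_def]) (simp add: frac_lt_1)
  have "(\<Sum>j\<in>\<tau>. vs j) \<in> interior K"
    using cell_generators_sum_interior[OF \<tau> c] w(1) wc by simp
  then obtain r where r: "(\<Sum>j<n. of_int (r j) *\<^sub>R vs j) = \<beta> - x" "\<forall>j<n. j \<notin> \<tau> \<longrightarrow> 0 \<le> r j"
    using lattice_point_nonneg_off_cell[OF \<tau>] lattice_diff[OF \<beta> \<open>x \<in> lattice\<close>] by blast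
  have "\<forall>j<n. ray vs j \<notin> Fan \<longrightarrow> 0 \<le> r j"
    using r(2) ray_in_Fan[OF \<tau>] by blast
  with x_Box r(1) have "Mgen x r \<in> Mgens vs n om \<beta>"
    unfolding Mgens_eq by force
  moreover have "gen_rays x r \<subseteq> \<tau>"
    using r(2) by (auto simp: gen_rays_def)
  ultimately show ?thesis
    by (rule that[OF \<tau> c wc x_def])
qed

lemma monomial_in_Mmod:
  assumes \<beta>: "\<beta> \<in> lattice" and w: "w \<in> interior K" "w \<in> lattice"
  shows "(\<lambda>u. a * mono w u) \<in> Mmod vs n om \<beta>"
proof -
  obtain \<tau> c x r where \<tau>: "\<tau> \<in> Cells" and c: "\<forall>j\<in>\<tau>. 0 < c j" and wc: "w = (\<Sum>j\<in>\<tau>. c j *\<^sub>R vs j)"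
    and x: "x = (\<Sum>j\<in>\<tau>. frac (c j) *\<^sub>R vs j)" and gen: "Mgen x r \<in> Mgens vs n om \<beta>"
    and J\<tau>: "gen_rays x r \<subseteq> \<tau>"
    using interior_point_generator[OF assms] by blast
  define J where "J = gen_rays x r"
  define k where "k j = nat \<lfloor>c j\<rfloor> - (if j \<in> J then 1 else 0)" for j
  define \<rho> where "\<rho> = (\<Sum>j\<in>\<tau>. of_nat (k j) *\<^sub>R vs j)"
  have fin: "finite \<tau>"
    using \<tau> by (rule finite_cell)
  have "w = \<rho> + (x + (\<Sum>j\<in>J. vs j))"
    unfolding wc x \<rho>_def k_def
    by (rule sum_floor_frac_split[OF fin J\<tau>[folded J_def]])
      (use c gen_rays_coord_ge_one[OF \<tau> c x] J\<tau> in \<open>auto simp: J_def less_imp_le\<close>)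
  moreover have x\<tau>: "x \<in> cone_of vs \<tau>" and \<rho>\<tau>: "\<rho> \<in> cone_of vs \<tau>"
    by (auto simp: x \<rho>_def cone_of_def frac_ge_0)
  moreover have "(\<Sum>j\<in>J. vs j) \<in> cone_of vs \<tau>"
    using J\<tau> fin by (intro convex_cone_sum convex_cone_cone_of cone_of_generator) (auto simp: J_def)
  ultimately have "x + (\<Sum>j\<in>J. vs j) \<in> cone_of vs \<tau>" "w = \<rho> + (x + (\<Sum>j\<in>J. vs j))"
    by (auto intro: convex_cone_add[OF convex_cone_cone_of[OF fin]])
  moreover have "Mgen x r = mono (x + (\<Sum>j\<in>J. vs j))"
    using Mgen_in_cell[OF \<tau> x\<tau> J\<tau>] by (simp add: J_def)
  ultimately have "kmult vs n om (\<lambda>u. a * mono \<rho> u) (Mgen x r) = (\<lambda>u. a * mono w u)"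
    using compat_cone_of[OF \<tau> \<rho>\<tau>] by (simp add: kmult_scaled_monomials)
  with Rspan.smul[OF Rsub_scaled_nat_comb[OF \<tau>, where a = a and k = k] gen] show ?thesis
    by (simp add: Mmod_def \<rho>_def)
qed

lemma CKint_subset_Mmod:
  assumes "\<beta> \<in> lattice"
  shows "CKint vs n \<subseteq> Mmod vs n om \<beta>"
proof
  fix f assume "f \<in> CKint vs n"
  then have W: "finite {w. f w \<noteq> 0}" "{w. f w \<noteq> 0} \<subseteq> interior K \<inter> lattice"
    by (simp_all add: CKint_def Kcone_eq)
  have "f = (\<lambda>u. \<Sum>w\<in>{w. f w \<noteq> 0}. f w * mono w u)"
    using W(1) by (auto simp: mono_def if_distrib[of "(*) _"] cong: if_cong)
  also have "\<dots> \<in> Mmod vs n om \<beta>"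
    unfolding Mmod_def using W monomial_in_Mmod[OF assms]
    by (intro Rspan_sum) (auto simp: Mmod_def)
  finally show "f \<in> Mmod vs n om \<beta>" .
qed

end

lemma generating_family_nonempty:
  fixes vs :: "nat \<Rightarrow> real^'d"
  assumes "\<forall>x \<in> lattice. \<exists>a :: nat \<Rightarrow> int. x = (\<Sum>j<n. of_int (a j) *\<^sub>R vs j)"
  shows "0 < n"
proof (rule ccontr)
  assume "\<not> 0 < n"
  have "(\<chi> i. (1::real)) \<in> (lattice :: (real^'d) set)"
    by (simp add: lattice_def)
  then obtain a :: "nat \<Rightarrow> int" where "(\<chi> i. (1::real)) = (\<Sum>j<n. of_int (a j) *\<^sub>R vs j)"
    using assms by blast
  with \<open>\<not> 0 < n\<close> have "(\<chi> i. (1::real)) = (0 :: real^'d)"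
    by simp
  then show False
    by (simp add: vec_eq_iff)
qed

theorem corollary2p15:
  fixes vs :: "nat \<Rightarrow> real^'d" and n :: nat and hc :: "real^'d"
    and om :: "nat \<Rightarrow> real" and \<beta> :: "real^'d"
  assumes vs_lattice: "\<forall>j<n. vs j \<in> lattice"
    and vs_inj: "inj_on vs {..<n}"
    and generates: "\<forall>x \<in> lattice. \<exists>a :: nat \<Rightarrow> int. x = (\<Sum>j<n. of_int (a j) *\<^sub>R vs j)"
    and h_hom: "hc \<in> lattice"
    and h_one: "\<forall>j<n. hc \<bullet> vs j = 1"
    and triang: "regular_triangulation vs n om"
    and beta: "\<beta> \<in> lattice"
  shows "(CKint vs n \<subseteq> Mmod vs n om \<beta> \<and> Mmod vs n om \<beta> \<subseteq> CK vs n)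
         \<and> (- \<beta> \<in> interior (Kcone vs n) \<longrightarrow> Mmod vs n om \<beta> = CKint vs n)"
proof -
  interpret lattice_fan vs n hc om
    using generating_family_nonempty[OF generates] h_one triang vs_lattice generates
    by unfold_locales auto
  have "CKint vs n \<subseteq> Mmod vs n om \<beta>"
    using beta by (rule CKint_subset_Mmod)
  moreover have "Mmod vs n om \<beta> \<subseteq> CK vs n"
    by (rule Mmod_subset_CK)
  moreover have "Mmod vs n om \<beta> \<subseteq> CKint vs n" if "- \<beta> \<in> interior (Kcone vs n)"
    using that by (intro Mmod_subset_CKint) (simp add: Kcone_eq)
  ultimately show ?thesis
    by blast
qed

end
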